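(* For every ensemble $\mathcal{E}=\{\eta_{i},\rho_{i}\}_{i\in\mathbb{N}_{n}}$, $p_{\sf G}(\mathcal{E})\ge \lambda/n$, where $\lambda$ is the smallest nonzero eigenvalue of $\rho_0=\sum_{i}\eta_i\rho_i$.
   Context: $\mathbb{N}_{n}=\{1,\ldots,n\}$. $\mathcal{H}$ is a finite-dimensional complex Hilbert space, $\mathbb{H}_{+}$ the positive-semidefinite operators on it, $\mathbbm{1}$ the identity. An ensemble $\mathcal{E}=\{\eta_{i},\rho_{i}\}_{i\in\mathbb{N}_{n}}$: density operators $\rho_i$ with probabilities $\eta_i>0$, $\sum_i\eta_i=1$. A measurement is $\{M_{?}\}\cup\{M_{i}\}_{i\in\mathbb{N}_{n}}\subseteq\mathbb{H}_+$ with $M_?+\sum_iM_i=\mathbbm{1}$. $\mathcal{C}_{x}(\mathcal{E})$ is the maximum of $\eta_{x}\Tr(\rho_{x}M_{x})/\Tr(\rho_{0}M_{x})$ over measurements with $\Tr(\rho_{0}M_{x})>0$. $\mathbb{M}_{i}(\mathcal{E})=\{E\in\mathbb{H}_{+}\mid\Tr[(\mathcal{C}_{i}(\mathcal{E})\rho_{0}-\eta_{i}\rho_{i})E]=0\}$; $\mathbb{M}(\mathcal{E})$ is the set of measurements with $M_i\in\mathbb{M}_i(\mathcal{E})$ for all $i$ (maximum-confidence measurements). $p_{\sf G}(\mathcal{E})=\max_{\mathcal{M}\in\mathbb{M}(\mathcal{E})}\sum_{i}\eta_{i}\Tr(\rho_{i}M_{i})$. *)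

theory Defs
  imports Complex_Main "Jordan_Normal_Form.Char_Poly"
begin

text \<open>Operators on the d-dimensional complex Hilbert space are d x d complex matrices
  (type complex mat, with carrier_mat d d).  Ensembles are indexed by 1..n.\<close>

definition trace_op :: "complex mat \<Rightarrow> complex" where
  "trace_op A = (\<Sum>j<dim_row A. A $$ (j, j))"

definition hermitian_op :: "nat \<Rightarrow> complex mat \<Rightarrow> bool" where
  "hermitian_op d A \<longleftrightarrow> A \<in> carrier_mat d d \<and>
     (\<forall>j<d. \<forall>k<d. A $$ (k, j) = cnj (A $$ (j, k)))"

definition psd_op :: "nat \<Rightarrow> complex mat \<Rightarrow> bool" where
  "psd_op d A \<longleftrightarrow> hermitian_op d A \<and>
     (\<forall>v \<in> carrier_vec d. Im (conjugate v \<bullet> (A *\<^sub>v v)) = 0 \<and> Re (conjugate v \<bullet> (A *\<^sub>v v)) \<ge> 0)"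

definition density_op :: "nat \<Rightarrow> complex mat \<Rightarrow> bool" where
  "density_op d \<rho> \<longleftrightarrow> psd_op d \<rho> \<and> trace_op \<rho> = 1"

definition ensemble :: "nat \<Rightarrow> nat \<Rightarrow> (nat \<Rightarrow> real) \<Rightarrow> (nat \<Rightarrow> complex mat) \<Rightarrow> bool" where
  "ensemble d n \<eta> \<rho> \<longleftrightarrow> (\<forall>i\<in>{1..n}. \<eta> i > 0 \<and> density_op d (\<rho> i)) \<and> (\<Sum>i=1..n. \<eta> i) = 1"

definition rho0 :: "nat \<Rightarrow> nat \<Rightarrow> (nat \<Rightarrow> real) \<Rightarrow> (nat \<Rightarrow> complex mat) \<Rightarrow> complex mat" where
  "rho0 d n \<eta> \<rho> = mat d d (\<lambda>(j, k). \<Sum>i=1..n. complex_of_real (\<eta> i) * \<rho> i $$ (j, k))"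

text \<open>A measurement {M_?} \<union> {M_i}_{i in 1..n}: Mq is the inconclusive element M_?.\<close>
definition measurement :: "nat \<Rightarrow> nat \<Rightarrow> complex mat \<Rightarrow> (nat \<Rightarrow> complex mat) \<Rightarrow> bool" where
  "measurement d n Mq M \<longleftrightarrow> psd_op d Mq \<and> (\<forall>i\<in>{1..n}. psd_op d (M i)) \<and>
     (\<forall>j<d. \<forall>k<d. Mq $$ (j, k) + (\<Sum>i=1..n. M i $$ (j, k)) = (1\<^sub>m d :: complex mat) $$ (j, k))"

text \<open>Tr(A B) as a real number (it is real for positive semidefinite A, B).\<close>
definition tr_re :: "complex mat \<Rightarrow> complex mat \<Rightarrow> real" where
  "tr_re A B = Re (trace_op (A * B))"

text \<open>C_x(E): the maximum (= supremum, it is attained) confidence for outcome x.\<close>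
definition conf :: "nat \<Rightarrow> nat \<Rightarrow> (nat \<Rightarrow> real) \<Rightarrow> (nat \<Rightarrow> complex mat) \<Rightarrow> nat \<Rightarrow> real" where
  "conf d n \<eta> \<rho> x = Sup {\<eta> x * tr_re (\<rho> x) (M x) / tr_re (rho0 d n \<eta> \<rho>) (M x) | Mq M.
      measurement d n Mq M \<and> tr_re (rho0 d n \<eta> \<rho>) (M x) > 0}"

definition MC_set :: "nat \<Rightarrow> nat \<Rightarrow> (nat \<Rightarrow> real) \<Rightarrow> (nat \<Rightarrow> complex mat) \<Rightarrow> nat \<Rightarrow> complex mat set" where
  "MC_set d n \<eta> \<rho> i = {E. psd_op d E \<and>
     trace_op ((complex_of_real (conf d n \<eta> \<rho> i) \<cdot>\<^sub>m rho0 d n \<eta> \<rho> - complex_of_real (\<eta> i) \<cdot>\<^sub>m \<rho> i) * E) = 0}"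

definition MC_measurement :: "nat \<Rightarrow> nat \<Rightarrow> (nat \<Rightarrow> real) \<Rightarrow> (nat \<Rightarrow> complex mat) \<Rightarrow> complex mat \<Rightarrow> (nat \<Rightarrow> complex mat) \<Rightarrow> bool" where
  "MC_measurement d n \<eta> \<rho> Mq M \<longleftrightarrow> measurement d n Mq M \<and> (\<forall>i\<in>{1..n}. M i \<in> MC_set d n \<eta> \<rho> i)"

text \<open>p_G(E): maximum (= supremum, it is attained) success probability over M(E).\<close>
definition pG :: "nat \<Rightarrow> nat \<Rightarrow> (nat \<Rightarrow> real) \<Rightarrow> (nat \<Rightarrow> complex mat) \<Rightarrow> real" where
  "pG d n \<eta> \<rho> = Sup {(\<Sum>i=1..n. \<eta> i * tr_re (\<rho> i) (M i)) | Mq M. MC_measurement d n \<eta> \<rho> Mq M}"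

end

theory Submission
  imports Defs "Jordan_Normal_Form.Spectral_Radius"
begin

text \<open>Let \<open>R = \<rho>\<^sub>0\<close>.  The kernel of \<open>R\<close> lies in the kernel of every \<open>\<rho>\<^sub>i\<close>, so the
  largest eigenvalue \<open>\<kappa>\<^sub>i\<close> of \<open>R\<^sup>-\<^sup>1\<^sup>/\<^sup>2 \<rho>\<^sub>i R\<^sup>-\<^sup>1\<^sup>/\<^sup>2\<close> (on the support of \<open>R\<close>) is the maximum of
  \<open>\<langle>v, \<rho>\<^sub>i v\<rangle> / \<langle>v, R v\<rangle>\<close>, attained at \<open>u\<^sub>i = R\<^sup>-\<^sup>1\<^sup>/\<^sup>2 w\<^sub>i\<close> for a unit eigenvector \<open>w\<^sub>i\<close>.  Hence the
  maximum confidence is \<open>\<eta>\<^sub>i \<kappa>\<^sub>i\<close> and every positive multiple of \<open>u\<^sub>i u\<^sub>i\<^sup>*\<close> is a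
  maximum-confidence element; comparing traces gives \<open>\<kappa>\<^sub>i \<ge> 1\<close>, and the smallest nonzero
  eigenvalue \<open>lam\<close> of \<open>R\<close> bounds \<open>\<parallel>u\<^sub>i\<parallel>\<^sup>2 \<le> 1 / lam\<close>.  The elements
  \<open>M\<^sub>i = u\<^sub>i u\<^sub>i\<^sup>* / (n \<parallel>u\<^sub>i\<parallel>\<^sup>2)\<close> therefore form a maximum-confidence measurement whose success
  probability \<open>\<Sum>\<^sub>i \<eta>\<^sub>i \<kappa>\<^sub>i / (n \<parallel>u\<^sub>i\<parallel>\<^sup>2)\<close> is at least \<open>\<Sum>\<^sub>i \<eta>\<^sub>i lam / n = lam / n\<close>.\<close>

subsection \<open>The standard inner product\<close>

definition cinner :: "nat \<Rightarrow> complex vec \<Rightarrow> complex vec \<Rightarrow> complex" where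
  "cinner d x y = (\<Sum>i<d. cnj (x $ i) * y $ i)"

definition vec_lincomb :: "nat \<Rightarrow> nat \<Rightarrow> (nat \<Rightarrow> complex) \<Rightarrow> (nat \<Rightarrow> complex vec) \<Rightarrow> complex vec" where
  "vec_lincomb d k c v = vec d (\<lambda>i. \<Sum>j<k. c j * v j $ i)"

lemma cnj_mult_self: "cnj z * z = complex_of_real ((cmod z)\<^sup>2)"
  by (metis complex_norm_square mult.commute)

lemma mult_cnj_self: "z * cnj z = complex_of_real ((cmod z)\<^sup>2)"
  by (rule complex_norm_square[symmetric])

lemma sum_lessThan_delta:
  assumes "l < (k::nat)"
  shows "(\<Sum>j<k. f j * (if l = j then 1 else 0)) = (f l :: 'a :: comm_ring_1)"
proof -
  have "(\<Sum>j<k. f j * (if l = j then 1 else 0)) = (\<Sum>j<k. if j = l then f j else 0)"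
    by (rule sum.cong) auto
  with assms show ?thesis by simp
qed

lemma vec_lincomb_carrier [simp]: "vec_lincomb d k c v \<in> carrier_vec d"
  and dim_vec_lincomb [simp]: "dim_vec (vec_lincomb d k c v) = d"
  unfolding vec_lincomb_def by simp_all

lemma vec_lincomb_index: "i < d \<Longrightarrow> vec_lincomb d k c v $ i = (\<Sum>j<k. c j * v j $ i)"
  unfolding vec_lincomb_def by simp

lemma cnj_cinner: "cnj (cinner d x y) = cinner d y x"
  unfolding cinner_def by (simp add: mult.commute)

lemma cinner_mult_cnj: "cinner d x y * cinner d y x = of_real ((cmod (cinner d x y))\<^sup>2)"
  by (metis cnj_cinner mult_cnj_self)

lemma cinner_zero_left [simp]: "cinner d (0\<^sub>v d) y = 0"
  and cinner_zero_right [simp]: "cinner d x (0\<^sub>v d) = 0"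
  unfolding cinner_def by simp_all

lemma cinner_lincomb_right: "cinner d x (vec_lincomb d k c v) = (\<Sum>j<k. c j * cinner d x (v j))"
proof -
  have "cinner d x (vec_lincomb d k c v) = (\<Sum>i<d. \<Sum>j<k. cnj (x $ i) * (c j * v j $ i))"
    unfolding cinner_def by (simp add: vec_lincomb_index sum_distrib_left)
  also have "\<dots> = (\<Sum>j<k. \<Sum>i<d. c j * (cnj (x $ i) * v j $ i))"
    by (subst sum.swap) (simp add: algebra_simps)
  finally show ?thesis
    unfolding cinner_def by (simp add: sum_distrib_left)
qed

lemma cinner_lincomb_left: "cinner d (vec_lincomb d k c v) y = (\<Sum>j<k. cnj (c j) * cinner d (v j) y)"
  by (subst cnj_cinner[symmetric]) (simp add: cinner_lincomb_right cnj_cinner)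

lemma cinner_diff_right:
  "y \<in> carrier_vec d \<Longrightarrow> z \<in> carrier_vec d \<Longrightarrow> cinner d x (y - z) = cinner d x y - cinner d x z"
  and cinner_diff_left:
  "y \<in> carrier_vec d \<Longrightarrow> z \<in> carrier_vec d \<Longrightarrow> cinner d (y - z) x = cinner d y x - cinner d z x"
  unfolding cinner_def by (simp_all add: algebra_simps sum_subtractf)

lemma cinner_smult_right: "y \<in> carrier_vec d \<Longrightarrow> cinner d x (a \<cdot>\<^sub>v y) = a * cinner d x y"
  and cinner_smult_left: "y \<in> carrier_vec d \<Longrightarrow> cinner d (a \<cdot>\<^sub>v y) x = cnj a * cinner d y x"
  unfolding cinner_def by (simp_all add: algebra_simps sum_distrib_left)

lemma cinner_self: "cinner d x x = of_real (\<Sum>i<d. (cmod (x $ i))\<^sup>2)"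
  unfolding cinner_def of_real_sum by (simp only: cnj_mult_self)

lemma Re_cinner_self: "Re (cinner d x x) = (\<Sum>i<d. (cmod (x $ i))\<^sup>2)"
  and Im_cinner_self [simp]: "Im (cinner d x x) = 0"
  by (simp_all add: cinner_self)

lemma cinner_self_nonneg: "Re (cinner d x x) \<ge> 0"
  by (simp add: Re_cinner_self sum_nonneg)

lemma cinner_self_eq_0_iff:
  assumes "x \<in> carrier_vec d"
  shows "cinner d x x = 0 \<longleftrightarrow> x = 0\<^sub>v d"
proof
  assume "cinner d x x = 0"
  then have "(\<Sum>i<d. (cmod (x $ i))\<^sup>2) = 0"
    by (simp only: cinner_self of_real_eq_0_iff)
  then have "\<forall>i\<in>{..<d}. (cmod (x $ i))\<^sup>2 = 0"
    by (subst (asm) sum_nonneg_eq_0_iff) auto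
  then show "x = 0\<^sub>v d"
    using assms by (intro eq_vecI) auto
qed simp

lemma cinner_self_pos:
  assumes "x \<in> carrier_vec d" "x \<noteq> 0\<^sub>v d"
  shows "Re (cinner d x x) > 0"
  using cinner_self_eq_0_iff[OF assms(1)] assms(2) cinner_self_nonneg[of d x]
  by (simp add: complex_eq_iff order_le_less)

lemma cinner_unit_vec_left:
  assumes "i < d"
  shows "cinner d (unit_vec d i) x = x $ i"
proof -
  have "cinner d (unit_vec d i) x = (\<Sum>j<d. x $ j * (if i = j then 1 else 0))"
    unfolding cinner_def unit_vec_def by (intro sum.cong) auto
  with assms show ?thesis by (simp only: sum_lessThan_delta)
qed

lemma cinner_unit_vec_right: "i < d \<Longrightarrow> cinner d x (unit_vec d i) = cnj (x $ i)"
  by (subst cnj_cinner[symmetric]) (simp add: cinner_unit_vec_left)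

lemma cinner_scalar_prod:
  "v \<in> carrier_vec d \<Longrightarrow> w \<in> carrier_vec d \<Longrightarrow> conjugate v \<bullet> w = cinner d v w"
  unfolding cinner_def scalar_prod_def by (auto simp: atLeast0LessThan intro!: sum.cong)

subsection \<open>Orthonormal families\<close>

definition orthonormal :: "nat \<Rightarrow> nat \<Rightarrow> (nat \<Rightarrow> complex vec) \<Rightarrow> bool" where
  "orthonormal d k v \<longleftrightarrow> (\<forall>j<k. v j \<in> carrier_vec d) \<and>
     (\<forall>j<k. \<forall>l<k. cinner d (v j) (v l) = (if j = l then 1 else 0))"

lemma orthonormalD:
  assumes "orthonormal d k v" "j < k"
  shows "v j \<in> carrier_vec d" "cinner d (v j) (v j) = 1" "v j \<noteq> 0\<^sub>v d"
proof -
  show "v j \<in> carrier_vec d" and unit: "cinner d (v j) (v j) = 1"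
    using assms unfolding orthonormal_def by auto
  from unit show "v j \<noteq> 0\<^sub>v d"
    by auto
qed

lemma cinner_orthonormal_lincomb:
  assumes "orthonormal d k v" "l < k"
  shows "cinner d (v l) (vec_lincomb d k c v) = c l"
proof -
  have "cinner d (v l) (vec_lincomb d k c v) = (\<Sum>j<k. c j * (if l = j then 1 else 0))"
    unfolding cinner_lincomb_right using assms unfolding orthonormal_def by (intro sum.cong) auto
  with assms(2) show ?thesis
    by (simp add: sum_lessThan_delta)
qed

lemma cinner_orthonormal_lincomb_self:
  "orthonormal d k v \<Longrightarrow> cinner d (vec_lincomb d k c v) (vec_lincomb d k c v) = (\<Sum>j<k. cnj (c j) * c j)"
  unfolding cinner_lincomb_left by (simp add: cinner_orthonormal_lincomb)

lemma orthonormal_residual: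
  assumes o: "orthonormal d k v" and x: "x \<in> carrier_vec d"
  defines "r \<equiv> x - vec_lincomb d k (\<lambda>j. cinner d (v j) x) v"
  shows "\<And>j. j < k \<Longrightarrow> cinner d (v j) r = 0"
    and "cinner d r r = cinner d x x - (\<Sum>j<k. of_real ((cmod (cinner d (v j) x))\<^sup>2))"
proof -
  show orth: "cinner d (v j) r = 0" if "j < k" for j
    unfolding r_def using that x by (simp add: cinner_diff_right cinner_orthonormal_lincomb[OF o])
  have "cinner d (vec_lincomb d k (\<lambda>j. cinner d (v j) x) v) r = 0"
    unfolding cinner_lincomb_left using orth by simp
  then have "cinner d r r = cinner d x r"
    unfolding r_def using x by (simp add: cinner_diff_left)
  also have "\<dots> = cinner d x x - (\<Sum>j<k. cinner d (v j) x * cinner d x (v j))"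
    unfolding r_def using x by (simp add: cinner_diff_right cinner_lincomb_right)
  finally show "cinner d r r = cinner d x x - (\<Sum>j<k. of_real ((cmod (cinner d (v j) x))\<^sup>2))"
    by (simp add: cinner_mult_cnj)
qed

lemma bessel_inequality:
  assumes o: "orthonormal d k v" and x: "x \<in> carrier_vec d"
  shows "(\<Sum>j<k. (cmod (cinner d (v j) x))\<^sup>2) \<le> Re (cinner d x x)"
proof -
  define r where "r = x - vec_lincomb d k (\<lambda>j. cinner d (v j) x) v"
  have "Re (cinner d r r) = Re (cinner d x x) - (\<Sum>j<k. (cmod (cinner d (v j) x))\<^sup>2)"
    using orthonormal_residual(2)[OF o x] unfolding r_def by simp
  with cinner_self_nonneg[of d r] show ?thesis by simp
qed

lemma orthonormal_sum_sq_entries: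
  assumes o: "orthonormal d k v"
  shows "(\<Sum>i<d. \<Sum>j<k. (cmod (v j $ i))\<^sup>2) = real k"
proof -
  have "(\<Sum>i<d. \<Sum>j<k. (cmod (v j $ i))\<^sup>2) = (\<Sum>j<k. Re (cinner d (v j) (v j)))"
    by (subst sum.swap) (simp add: Re_cinner_self)
  also have "\<dots> = (\<Sum>j<k. 1)"
    using orthonormalD(2)[OF o] by (intro sum.cong) auto
  finally show ?thesis by simp
qed

lemma orthonormal_card_le:
  assumes o: "orthonormal d k v"
  shows "k \<le> d"
proof -
  have "real k = (\<Sum>i<d. \<Sum>j<k. (cmod (v j $ i))\<^sup>2)"
    using orthonormal_sum_sq_entries[OF o] by simp
  also have "\<dots> \<le> (\<Sum>i<d. 1)"
  proof (rule sum_mono)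
    fix i assume "i \<in> {..<d}"
    then show "(\<Sum>j<k. (cmod (v j $ i))\<^sup>2) \<le> 1"
      using bessel_inequality[OF o, of "unit_vec d i"]
      by (simp add: cinner_unit_vec_left cinner_unit_vec_right)
  qed
  finally show ?thesis by simp
qed

definition normalize_vec :: "nat \<Rightarrow> complex vec \<Rightarrow> complex vec" where
  "normalize_vec d z = complex_of_real (1 / sqrt (Re (cinner d z z))) \<cdot>\<^sub>v z"

lemma normalize_vec_unit:
  assumes z: "z \<in> carrier_vec d" "z \<noteq> 0\<^sub>v d"
  shows "normalize_vec d z \<in> carrier_vec d"
    and "cinner d (normalize_vec d z) (normalize_vec d z) = 1"
    and "cinner d y (normalize_vec d z) = complex_of_real (1 / sqrt (Re (cinner d z z))) * cinner d y z"
proof -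
  define q where "q = Re (cinner d z z)"
  have q: "q > 0" and zz: "cinner d z z = of_real q"
    using cinner_self_pos[OF z] unfolding q_def by (simp_all add: cinner_self)
  show "normalize_vec d z \<in> carrier_vec d"
    using z unfolding normalize_vec_def by simp
  show "cinner d y (normalize_vec d z) = complex_of_real (1 / sqrt (Re (cinner d z z))) * cinner d y z"
    using z unfolding normalize_vec_def by (simp add: cinner_smult_right)
  have "cinner d (normalize_vec d z) (normalize_vec d z) = of_real (1 / sqrt q * (1 / sqrt q) * q)"
    using z unfolding normalize_vec_def q_def[symmetric]
    by (simp only: cinner_smult_right cinner_smult_left smult_carrier_vec zz
        complex_cnj_complex_of_real of_real_mult mult.assoc)
  also have "1 / sqrt q * (1 / sqrt q) * q = 1"
    using q by (simp add: field_simps)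
  finally show "cinner d (normalize_vec d z) (normalize_vec d z) = 1" by simp
qed

lemma orthonormal_extend:
  assumes o: "orthonormal d k v" and x: "x \<in> carrier_vec d"
    and xx: "cinner d x x = 1" and ox: "\<forall>j<k. cinner d (v j) x = 0"
  shows "orthonormal d (Suc k) (v(k := x))"
proof -
  have "\<forall>j<k. cinner d x (v j) = 0"
    using ox by (metis cnj_cinner complex_cnj_zero)
  with o x xx ox show ?thesis
    unfolding orthonormal_def by (auto simp: less_Suc_eq)
qed

lemma orthonormal_complete:
  assumes o: "orthonormal d d v" and z: "z \<in> carrier_vec d"
    and oz: "\<forall>j<d. cinner d (v j) z = 0"
  shows "z = 0\<^sub>v d"
proof (rule ccontr)
  assume "z \<noteq> 0\<^sub>v d"
  note nz = normalize_vec_unit[OF z this]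
  have "orthonormal d (Suc d) (v(d := normalize_vec d z))"
    using nz oz by (intro orthonormal_extend[OF o]) auto
  from orthonormal_card_le[OF this] show False by simp
qed

lemma orthonormal_coords_eq:
  assumes o: "orthonormal d d w" and x: "x \<in> carrier_vec d" and y: "y \<in> carrier_vec d"
    and eq: "\<And>j. j < d \<Longrightarrow> cinner d (w j) x = cinner d (w j) y"
  shows "x = y"
proof -
  have "x - y = 0\<^sub>v d"
    using o x y eq orthonormalD(1)[OF o] by (intro orthonormal_complete[OF o]) (auto simp: cinner_diff_right)
  show ?thesis
  proof (rule eq_vecI)
    fix i assume "i < dim_vec y"
    with y \<open>x - y = 0\<^sub>v d\<close> have "(x - y) $ i = 0" by simp
    with x y \<open>i < dim_vec y\<close> show "x $ i = y $ i" by simp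
  qed (use x y in simp)
qed

text \<open>Some standard basis vector has a nonzero residual, since otherwise counting squared
  entries would give \<open>k = d\<close>.\<close>

lemma orthonormal_extend_one:
  assumes o: "orthonormal d k v" and k: "k < d"
  obtains x where "x \<in> carrier_vec d" "cinner d x x = 1" "\<forall>j<k. cinner d (v j) x = 0"
proof -
  define r where "r i = unit_vec d i - vec_lincomb d k (\<lambda>j. cinner d (v j) (unit_vec d i)) v" for i
  have "\<exists>i<d. r i \<noteq> 0\<^sub>v d"
  proof (rule ccontr)
    assume "\<not> ?thesis"
    then have "of_real (\<Sum>j<k. (cmod (v j $ i))\<^sup>2) = (1 :: complex)" if i: "i < d" for i
      using orthonormal_residual(2)[OF o, of "unit_vec d i"] i
      by (simp add: r_def cinner_unit_vec_left cinner_unit_vec_right)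
    then have "(\<Sum>j<k. (cmod (v j $ i))\<^sup>2) = 1" if "i < d" for i
      using that of_real_eq_1_iff by blast
    then have "real k = real d"
      using orthonormal_sum_sq_entries[OF o] by simp
    with k show False by simp
  qed
  then obtain i where i: "i < d" "r i \<noteq> 0\<^sub>v d" by auto
  have rc: "r i \<in> carrier_vec d" unfolding r_def by simp
  have "cinner d (v j) (r i) = 0" if "j < k" for j
    using orthonormal_residual(1)[OF o, of "unit_vec d i" j] that unfolding r_def by simp
  then show ?thesis
    using normalize_vec_unit[OF rc i(2)] by (intro that[of "normalize_vec d (r i)"]) auto
qed

lemma orthonormal_extend_basis:
  "orthonormal d k v \<Longrightarrow> k \<le> d \<Longrightarrow> \<exists>w. orthonormal d d w \<and> (\<forall>j<k. w j = v j)"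
proof (induction "d - k" arbitrary: k v)
  case 0
  then show ?case by auto
next
  case (Suc m)
  then have k: "k < d" by simp
  obtain x where x: "x \<in> carrier_vec d" "cinner d x x = 1" "\<forall>j<k. cinner d (v j) x = 0"
    using orthonormal_extend_one[OF Suc.prems(1) k] .
  have extended: "orthonormal d (Suc k) (v(k := x))"
    by (rule orthonormal_extend[OF Suc.prems(1) x])
  have "\<exists>w. orthonormal d d w \<and> (\<forall>j<Suc k. w j = (v(k := x)) j)"
    using Suc.hyps(2) k by (intro Suc.hyps(1)[OF _ extended]) simp_all
  then show ?case by auto
qed

lemma orthonormal_expansion:
  assumes o: "orthonormal d d v" and x: "x \<in> carrier_vec d"
  shows "x = vec_lincomb d d (\<lambda>j. cinner d (v j) x) v"
  using x by (intro orthonormal_coords_eq[OF o]) (simp_all add: cinner_orthonormal_lincomb[OF o])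

lemma parseval:
  assumes o: "orthonormal d d w" and x: "x \<in> carrier_vec d"
  shows "cinner d x x = (\<Sum>p<d. of_real ((cmod (cinner d (w p) x))\<^sup>2))"
  by (subst (1 2) orthonormal_expansion[OF o x])
    (simp only: cinner_orthonormal_lincomb_self[OF o] cnj_mult_self)

subsection \<open>Hermitian matrices and the spectral theorem\<close>

lemma mult_mat_vec_index:
  assumes "A \<in> carrier_mat d d" "x \<in> carrier_vec d" "i < d"
  shows "(A *\<^sub>v x) $ i = (\<Sum>l<d. A $$ (i, l) * x $ l)"
proof -
  have "(A *\<^sub>v x) $ i = row A i \<bullet> x"
    using assms by simp
  also have "\<dots> = (\<Sum>l\<in>{0..<d}. row A i $ l * x $ l)"
    using assms unfolding scalar_prod_def by simp
  finally show ?thesis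
    using assms by (simp add: atLeast0LessThan)
qed

lemma mult_mat_unit_vec_index:
  assumes "(A :: complex mat) \<in> carrier_mat d d" "a < d" "b < d"
  shows "(A *\<^sub>v unit_vec d a) $ b = A $$ (b, a)"
proof -
  have "(A *\<^sub>v unit_vec d a) $ b = (\<Sum>l<d. A $$ (b, l) * (if a = l then 1 else 0))"
    using assms by (subst mult_mat_vec_index) (auto simp: unit_vec_def intro!: sum.cong)
  also have "\<dots> = A $$ (b, a)"
    by (rule sum_lessThan_delta[OF assms(2)])
  finally show ?thesis .
qed

lemma cinner_form_expand:
  assumes A: "A \<in> carrier_mat d d" and v: "v \<in> carrier_vec d"
  shows "cinner d v (A *\<^sub>v v) = (\<Sum>a<d. \<Sum>b<d. cnj (v $ a) * A $$ (a, b) * v $ b)"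
  unfolding cinner_def
  by (intro sum.cong refl) (simp add: mult_mat_vec_index[OF A v] sum_distrib_left mult.assoc
      del: index_mult_mat_vec)

lemma hermitian_op_carrier: "hermitian_op d A \<Longrightarrow> A \<in> carrier_mat d d"
  unfolding hermitian_op_def by blast

lemma hermitian_cinner_adjoint:
  assumes A: "hermitian_op d A" and x: "x \<in> carrier_vec d" and y: "y \<in> carrier_vec d"
  shows "cinner d (A *\<^sub>v x) y = cinner d x (A *\<^sub>v y)"
proof -
  have Ac: "A \<in> carrier_mat d d"
    using A by (rule hermitian_op_carrier)
  have h: "cnj (A $$ (i, l)) = A $$ (l, i)" if "i < d" "l < d" for i l
    using A that unfolding hermitian_op_def by metis
  have "cinner d (A *\<^sub>v x) y = (\<Sum>i<d. \<Sum>l<d. cnj (A $$ (i, l)) * cnj (x $ l) * y $ i)"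
    unfolding cinner_def using Ac x
    by (intro sum.cong refl) (simp add: mult_mat_vec_index sum_distrib_right del: index_mult_mat_vec)
  also have "\<dots> = (\<Sum>i<d. \<Sum>l<d. cnj (x $ l) * (A $$ (l, i) * y $ i))"
    by (intro sum.cong refl) (simp add: h)
  also have "\<dots> = (\<Sum>l<d. \<Sum>i<d. cnj (x $ l) * (A $$ (l, i) * y $ i))"
    by (rule sum.swap)
  also have "\<dots> = cinner d x (A *\<^sub>v y)"
    unfolding cinner_def using Ac y
    by (intro sum.cong refl) (simp add: mult_mat_vec_index sum_distrib_left del: index_mult_mat_vec)
  finally show ?thesis .
qed

lemma hermitian_form_real:
  assumes "hermitian_op d A" "x \<in> carrier_vec d"
  shows "Im (cinner d x (A *\<^sub>v x)) = 0"
proof -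
  have "cnj (cinner d x (A *\<^sub>v x)) = cinner d x (A *\<^sub>v x)"
    using hermitian_cinner_adjoint[OF assms assms(2)] by (simp add: cnj_cinner)
  then show ?thesis
    by (metis Reals_cnj_iff complex_is_Real_iff)
qed

lemma hermitian_eigenvalue_real:
  assumes A: "hermitian_op d A" and x: "x \<in> carrier_vec d" "x \<noteq> 0\<^sub>v d"
    and ev: "A *\<^sub>v x = \<kappa> \<cdot>\<^sub>v x"
  shows "\<kappa> = of_real (Re \<kappa>)"
proof -
  have "Im (\<kappa> * cinner d x x) = 0"
    using hermitian_form_real[OF A x(1)] ev x(1) by (simp add: cinner_smult_right)
  with cinner_self_pos[OF x] show ?thesis
    by (simp add: complex_eq_iff)
qed

lemma mult_mat_vec_lincomb:
  assumes A: "A \<in> carrier_mat d d" and u: "\<And>b. b < m \<Longrightarrow> u b \<in> carrier_vec d"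
  shows "A *\<^sub>v vec_lincomb d m c u = vec_lincomb d m c (\<lambda>b. A *\<^sub>v u b)"
proof (rule eq_vecI)
  fix i assume "i < dim_vec (vec_lincomb d m c (\<lambda>b. A *\<^sub>v u b))"
  then have i: "i < d" by simp
  have "(A *\<^sub>v vec_lincomb d m c u) $ i = (\<Sum>l<d. \<Sum>b<m. A $$ (i, l) * (c b * u b $ l))"
    using A i by (simp add: mult_mat_vec_index vec_lincomb_index sum_distrib_left del: index_mult_mat_vec)
  also have "\<dots> = (\<Sum>b<m. c b * (\<Sum>l<d. A $$ (i, l) * u b $ l))"
    by (subst sum.swap) (simp add: sum_distrib_left algebra_simps)
  also have "\<dots> = vec_lincomb d m c (\<lambda>b. A *\<^sub>v u b) $ i"
    using A i u by (simp add: mult_mat_vec_index vec_lincomb_index del: index_mult_mat_vec)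
  finally show "(A *\<^sub>v vec_lincomb d m c u) $ i = vec_lincomb d m c (\<lambda>b. A *\<^sub>v u b) $ i" .
qed (use A in simp)

definition compress_mat :: "nat \<Rightarrow> nat \<Rightarrow> (nat \<Rightarrow> complex vec) \<Rightarrow> complex mat \<Rightarrow> complex mat" where
  "compress_mat d k w A = mat (d - k) (d - k) (\<lambda>(a, b). cinner d (w (k + a)) (A *\<^sub>v w (k + b)))"

lemma cinner_orthonormal_shifted_lincomb:
  assumes w: "orthonormal d d w" and j: "j < d"
  shows "cinner d (w j) (vec_lincomb d (d - k) c (\<lambda>b. w (k + b))) = (if j < k then 0 else c (j - k))"
proof (cases "j < k")
  case True
  with w j show ?thesis
    unfolding cinner_lincomb_right orthonormal_def by (auto intro!: sum.neutral)
next
  case False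
  have "orthonormal d (d - k) (\<lambda>b. w (k + b))"
    using w unfolding orthonormal_def by auto
  from cinner_orthonormal_lincomb[OF this, of "j - k"] False j show ?thesis
    by simp
qed

text \<open>As \<open>A\<close> is Hermitian, the orthogonal complement of eigenvectors \<open>w\<^sub>0, \<dots>, w\<^sub>k\<^sub>-\<^sub>1\<close> is
  \<open>A\<close>-invariant, so eigenvectors of the compression of \<open>A\<close> to it lift to eigenvectors of \<open>A\<close>.\<close>

lemma compress_mat_eigenvector_lift:
  assumes A: "hermitian_op d A" and w: "orthonormal d d w"
    and ev: "\<forall>j<k. A *\<^sub>v w j = complex_of_real (\<mu> j) \<cdot>\<^sub>v w j"
    and y: "y \<in> carrier_vec (d - k)" and Cy: "compress_mat d k w A *\<^sub>v y = \<kappa> \<cdot>\<^sub>v y"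
  defines "x \<equiv> vec_lincomb d (d - k) (\<lambda>b. y $ b) (\<lambda>b. w (k + b))"
  shows "A *\<^sub>v x = \<kappa> \<cdot>\<^sub>v x"
proof -
  have Ac: "A \<in> carrier_mat d d"
    using A by (rule hermitian_op_carrier)
  have wc: "\<And>j. j < d \<Longrightarrow> w j \<in> carrier_vec d"
    using orthonormalD(1)[OF w] .
  have xc: "x \<in> carrier_vec d"
    unfolding x_def by simp
  have x: "cinner d (w j) x = (if j < k then 0 else y $ (j - k))" if "j < d" for j
    unfolding x_def using cinner_orthonormal_shifted_lincomb[OF w that] .
  have "cinner d (w j) (A *\<^sub>v x) = cinner d (w j) (\<kappa> \<cdot>\<^sub>v x)" if j: "j < d" for j
  proof (cases "j < k")
    case True
    have "cinner d (w j) (A *\<^sub>v x) = cinner d (A *\<^sub>v w j) x"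
      using hermitian_cinner_adjoint[OF A wc[OF j] xc] by simp
    then show ?thesis
      using True ev x[OF j] wc[OF j] xc by (simp add: cinner_smult_left cinner_smult_right)
  next
    case False
    have "A *\<^sub>v x = vec_lincomb d (d - k) (\<lambda>b. y $ b) (\<lambda>b. A *\<^sub>v w (k + b))"
      unfolding x_def using Ac wc by (intro mult_mat_vec_lincomb) auto
    then have "cinner d (w j) (A *\<^sub>v x) = (\<Sum>b<d - k. y $ b * compress_mat d k w A $$ (j - k, b))"
      using False j by (simp add: cinner_lincomb_right compress_mat_def)
    also have "\<dots> = (compress_mat d k w A *\<^sub>v y) $ (j - k)"
      using y False j
      by (simp add: mult_mat_vec_index[of _ "d - k"] compress_mat_def mult.commute del: index_mult_mat_vec)
    finally show ?thesis
      using Cy y False j x[OF j] xc by (simp add: cinner_smult_right)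
  qed
  then show ?thesis
    using xc Ac by (intro orthonormal_coords_eq[OF w]) (auto intro: mult_mat_vec_carrier)
qed

lemma hermitian_eigenvector_orthogonal:
  assumes A: "hermitian_op d A" and o: "orthonormal d k v" and k: "k < d"
    and ev: "\<forall>j<k. A *\<^sub>v v j = complex_of_real (\<mu> j) \<cdot>\<^sub>v v j"
  obtains x m where "x \<in> carrier_vec d" "cinner d x x = 1" "\<forall>j<k. cinner d (v j) x = 0"
    "A *\<^sub>v x = complex_of_real m \<cdot>\<^sub>v x"
proof -
  obtain w where w: "orthonormal d d w" "\<forall>j<k. w j = v j"
    using orthonormal_extend_basis[OF o] k by auto
  have C: "compress_mat d k w A \<in> carrier_mat (d - k) (d - k)"
    unfolding compress_mat_def by simp
  obtain \<kappa> where "eigenvalue (compress_mat d k w A) \<kappa>"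
    using spectrum_non_empty[OF C] k unfolding spectrum_def by auto
  then obtain y where y: "y \<in> carrier_vec (d - k)" "y \<noteq> 0\<^sub>v (d - k)"
    and Cy: "compress_mat d k w A *\<^sub>v y = \<kappa> \<cdot>\<^sub>v y"
    unfolding eigenvalue_def eigenvector_def using C by auto
  define x where "x = vec_lincomb d (d - k) (\<lambda>b. y $ b) (\<lambda>b. w (k + b))"
  have xc: "x \<in> carrier_vec d"
    unfolding x_def by simp
  have Ax: "A *\<^sub>v x = \<kappa> \<cdot>\<^sub>v x"
    unfolding x_def using ev w(2) by (intro compress_mat_eigenvector_lift[OF A w(1) _ y(1) Cy, of \<mu>]) simp
  have x: "cinner d (w j) x = (if j < k then 0 else y $ (j - k))" if "j < d" for j
    unfolding x_def using cinner_orthonormal_shifted_lincomb[OF w(1) that] .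
  have x0: "x \<noteq> 0\<^sub>v d"
  proof
    assume "x = 0\<^sub>v d"
    then have "y $ a = 0" if "a < d - k" for a
      using x[of "k + a"] that by simp
    then have "y = 0\<^sub>v (d - k)"
      using y(1) by (intro eq_vecI) auto
    with y(2) show False by simp
  qed
  have "A *\<^sub>v normalize_vec d x = complex_of_real (Re \<kappa>) \<cdot>\<^sub>v normalize_vec d x"
    unfolding normalize_vec_def
    using Ax hermitian_eigenvalue_real[OF A xc x0 Ax] hermitian_op_carrier[OF A] xc
    by (simp add: mult_mat_vec smult_smult_assoc mult.commute)
  moreover have "cinner d (v j) (normalize_vec d x) = 0" if "j < k" for j
    using normalize_vec_unit(3)[OF xc x0] x[of j] w(2) that k by simp
  ultimately show ?thesis
    using normalize_vec_unit(1,2)[OF xc x0] by (intro that) auto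
qed

theorem hermitian_eigenbasis:
  assumes "hermitian_op d A"
  obtains v \<mu> where "orthonormal d d v" "\<forall>j<d. A *\<^sub>v v j = complex_of_real (\<mu> j) \<cdot>\<^sub>v v j"
proof -
  have "k \<le> d \<Longrightarrow> \<exists>v \<mu>. orthonormal d k v \<and> (\<forall>j<k. A *\<^sub>v v j = complex_of_real (\<mu> j) \<cdot>\<^sub>v v j)"
    for k
  proof (induction k)
    case 0
    then show ?case unfolding orthonormal_def by auto
  next
    case (Suc k)
    then obtain v \<mu> where v: "orthonormal d k v" "\<forall>j<k. A *\<^sub>v v j = complex_of_real (\<mu> j) \<cdot>\<^sub>v v j"
      by auto
    obtain x m where x: "x \<in> carrier_vec d" "cinner d x x = 1" "\<forall>j<k. cinner d (v j) x = 0"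
      "A *\<^sub>v x = complex_of_real m \<cdot>\<^sub>v x"
      using hermitian_eigenvector_orthogonal[OF assms v(1) _ v(2)] Suc.prems by auto
    have "orthonormal d (Suc k) (v(k := x))"
      by (rule orthonormal_extend[OF v(1) x(1-3)])
    moreover have "\<forall>j<Suc k. A *\<^sub>v (v(k := x)) j = complex_of_real ((\<mu>(k := m)) j) \<cdot>\<^sub>v (v(k := x)) j"
      using v(2) x(4) by (auto simp: less_Suc_eq)
    ultimately show ?case by blast
  qed
  then show ?thesis
    using that by blast
qed

subsection \<open>Positive semidefinite matrices\<close>

lemma psd_op_iff_form:
  "psd_op d A \<longleftrightarrow> hermitian_op d A \<and> (\<forall>v\<in>carrier_vec d. Re (cinner d v (A *\<^sub>v v)) \<ge> 0)"
proof -
  have "conjugate v \<bullet> (A *\<^sub>v v) = cinner d v (A *\<^sub>v v)" if "hermitian_op d A" "v \<in> carrier_vec d" for v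
    using that by (intro cinner_scalar_prod mult_mat_vec_carrier[of _ d d] hermitian_op_carrier)
  then show ?thesis
    unfolding psd_op_def by (auto simp: hermitian_form_real)
qed

lemma psd_op_hermitian: "psd_op d A \<Longrightarrow> hermitian_op d A"
  and psd_op_carrier: "psd_op d A \<Longrightarrow> A \<in> carrier_mat d d"
  and psd_op_form_nonneg: "psd_op d A \<Longrightarrow> v \<in> carrier_vec d \<Longrightarrow> Re (cinner d v (A *\<^sub>v v)) \<ge> 0"
  by (auto simp: psd_op_iff_form hermitian_op_carrier)

lemma psd_op_one: "psd_op d (1\<^sub>m d)"
  unfolding psd_op_iff_form hermitian_op_def by (simp add: cinner_self_nonneg)

lemma vec_lincomb_smult:
  assumes "\<And>p. p < k \<Longrightarrow> w p \<in> carrier_vec d"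
  shows "vec_lincomb d k c (\<lambda>p. a p \<cdot>\<^sub>v w p) = vec_lincomb d k (\<lambda>p. c p * a p) w"
proof (rule eq_vecI)
  fix i assume "i < dim_vec (vec_lincomb d k (\<lambda>p. c p * a p) w)"
  moreover have "\<And>p. p < k \<Longrightarrow> dim_vec (w p) = d"
    using assms by auto
  ultimately show "vec_lincomb d k c (\<lambda>p. a p \<cdot>\<^sub>v w p) $ i = vec_lincomb d k (\<lambda>p. c p * a p) w $ i"
    by (auto simp: vec_lincomb_index mult.assoc intro!: sum.cong)
qed simp

lemma eigenbasis_mult_vec:
  assumes A: "A \<in> carrier_mat d d" and o: "orthonormal d d w"
    and ev: "\<forall>p<d. A *\<^sub>v w p = complex_of_real (\<beta> p) \<cdot>\<^sub>v w p" and x: "x \<in> carrier_vec d"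
  shows "A *\<^sub>v x = vec_lincomb d d (\<lambda>p. cinner d (w p) x * complex_of_real (\<beta> p)) w"
proof -
  have wc: "\<And>p. p < d \<Longrightarrow> w p \<in> carrier_vec d"
    using orthonormalD(1)[OF o] .
  have "A *\<^sub>v x = vec_lincomb d d (\<lambda>p. cinner d (w p) x) (\<lambda>p. A *\<^sub>v w p)"
    by (subst orthonormal_expansion[OF o x]) (rule mult_mat_vec_lincomb[OF A wc])
  also have "\<dots> = vec_lincomb d d (\<lambda>p. cinner d (w p) x) (\<lambda>p. complex_of_real (\<beta> p) \<cdot>\<^sub>v w p)"
    unfolding vec_lincomb_def using ev by (intro eq_vecI) (auto intro!: sum.cong)
  finally show ?thesis
    by (simp only: vec_lincomb_smult[OF wc])
qed

lemma eigenbasis_form: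
  assumes A: "A \<in> carrier_mat d d" and o: "orthonormal d d w"
    and ev: "\<forall>p<d. A *\<^sub>v w p = complex_of_real (\<beta> p) \<cdot>\<^sub>v w p" and x: "x \<in> carrier_vec d"
  shows "cinner d x (A *\<^sub>v x) = (\<Sum>p<d. complex_of_real (\<beta> p * (cmod (cinner d (w p) x))\<^sup>2))"
proof -
  have "cinner d x (A *\<^sub>v x) = (\<Sum>p<d. cinner d (w p) x * complex_of_real (\<beta> p) * cinner d x (w p))"
    unfolding eigenbasis_mult_vec[OF A o ev x] cinner_lincomb_right ..
  also have "\<dots> = (\<Sum>p<d. complex_of_real (\<beta> p * (cmod (cinner d (w p) x))\<^sup>2))"
  proof (intro sum.cong refl)
    fix p
    have "cinner d (w p) x * cinner d x (w p) = of_real ((cmod (cinner d (w p) x))\<^sup>2)"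
      by (rule cinner_mult_cnj)
    then show "cinner d (w p) x * complex_of_real (\<beta> p) * cinner d x (w p) =
        complex_of_real (\<beta> p * (cmod (cinner d (w p) x))\<^sup>2)"
      by (simp only: of_real_mult) (simp add: algebra_simps)
  qed
  finally show ?thesis .
qed

lemma psd_eigenbasis_nonneg:
  assumes "psd_op d A" "orthonormal d d w"
    and "\<forall>p<d. A *\<^sub>v w p = complex_of_real (\<beta> p) \<cdot>\<^sub>v w p" "p < d"
  shows "\<beta> p \<ge> 0"
  using psd_op_form_nonneg[OF assms(1) orthonormalD(1)[OF assms(2,4)]] assms(3,4)
    orthonormalD[OF assms(2,4)] by (simp add: cinner_smult_right)

lemma psd_form_eq_0_imp_kernel:
  assumes A: "psd_op d A" and x: "x \<in> carrier_vec d" and z: "Re (cinner d x (A *\<^sub>v x)) = 0"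
  shows "A *\<^sub>v x = 0\<^sub>v d"
proof -
  have Ac: "A \<in> carrier_mat d d"
    using A by (rule psd_op_carrier)
  obtain w \<beta> where o: "orthonormal d d w" and ev: "\<forall>p<d. A *\<^sub>v w p = complex_of_real (\<beta> p) \<cdot>\<^sub>v w p"
    using hermitian_eigenbasis[OF psd_op_hermitian[OF A]] .
  have "\<forall>p\<in>{..<d}. \<beta> p * (cmod (cinner d (w p) x))\<^sup>2 = 0"
    using z psd_eigenbasis_nonneg[OF A o ev] unfolding eigenbasis_form[OF Ac o ev x]
    by (subst sum_nonneg_eq_0_iff[symmetric]) auto
  then have "cinner d (w p) x * complex_of_real (\<beta> p) = 0" if "p < d" for p
    using that by auto
  then show ?thesis
    unfolding eigenbasis_mult_vec[OF Ac o ev x]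
    by (intro eq_vecI) (auto simp: vec_lincomb_index intro!: sum.neutral)
qed

subsection \<open>Traces\<close>

lemma trace_op_mult:
  assumes A: "A \<in> carrier_mat d d" and B: "B \<in> carrier_mat d d"
  shows "trace_op (A * B) = (\<Sum>a<d. \<Sum>b<d. A $$ (a, b) * B $$ (b, a))"
  unfolding trace_op_def using A B
  by (auto simp: scalar_prod_def atLeast0LessThan intro!: sum.cong)

lemma psd_trace_mult_eq_sum_forms:
  assumes M: "psd_op d M"
  obtains w \<beta> where "\<forall>p<d. \<beta> p \<ge> 0 \<and> w p \<in> carrier_vec d"
    "\<forall>A \<in> carrier_mat d d. trace_op (A * M) = (\<Sum>p<d. complex_of_real (\<beta> p) * cinner d (w p) (A *\<^sub>v w p))"
proof -
  have Mc: "M \<in> carrier_mat d d"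
    using M by (rule psd_op_carrier)
  obtain w \<beta> where o: "orthonormal d d w" and ev: "\<forall>p<d. M *\<^sub>v w p = complex_of_real (\<beta> p) \<cdot>\<^sub>v w p"
    using hermitian_eigenbasis[OF psd_op_hermitian[OF M]] .
  have wc: "\<And>p. p < d \<Longrightarrow> w p \<in> carrier_vec d"
    using orthonormalD(1)[OF o] .
  have entry: "M $$ (b, a) = (\<Sum>p<d. cnj (w p $ a) * complex_of_real (\<beta> p) * w p $ b)"
    if ab: "a < d" "b < d" for a b
  proof -
    have "M $$ (b, a) = (M *\<^sub>v unit_vec d a) $ b"
      using mult_mat_unit_vec_index[OF Mc ab] by simp
    also have "\<dots> = (\<Sum>p<d. cnj (w p $ a) * complex_of_real (\<beta> p) * w p $ b)"
      using ab by (simp add: eigenbasis_mult_vec[OF Mc o ev] vec_lincomb_index cinner_unit_vec_right)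
    finally show ?thesis .
  qed
  have "trace_op (A * M) = (\<Sum>p<d. complex_of_real (\<beta> p) * cinner d (w p) (A *\<^sub>v w p))"
    if A: "A \<in> carrier_mat d d" for A
  proof -
    have "trace_op (A * M) =
        (\<Sum>a<d. \<Sum>b<d. \<Sum>p<d. complex_of_real (\<beta> p) * (cnj (w p $ a) * A $$ (a, b) * w p $ b))"
      unfolding trace_op_mult[OF A Mc]
      by (intro sum.cong refl) (simp add: entry sum_distrib_left algebra_simps)
    also have "\<dots> = (\<Sum>p<d. \<Sum>a<d. \<Sum>b<d. complex_of_real (\<beta> p) * (cnj (w p $ a) * A $$ (a, b) * w p $ b))"
      by (subst sum.swap, subst (2) sum.swap) simp
    also have "\<dots> = (\<Sum>p<d. complex_of_real (\<beta> p) * cinner d (w p) (A *\<^sub>v w p))"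
      by (intro sum.cong refl) (simp add: cinner_form_expand[OF A wc] sum_distrib_left)
    finally show ?thesis .
  qed
  with psd_eigenbasis_nonneg[OF M o ev] wc show ?thesis
    using that[of \<beta> w] by blast
qed

lemma psd_trace_mult_mono:
  assumes M: "psd_op d M" and X: "X \<in> carrier_mat d d" and Y: "Y \<in> carrier_mat d d"
    and le: "\<forall>v\<in>carrier_vec d. e * Re (cinner d v (X *\<^sub>v v)) \<le> \<kappa> * Re (cinner d v (Y *\<^sub>v v))"
  shows "e * tr_re X M \<le> \<kappa> * tr_re Y M"
proof -
  obtain w \<beta> where wb: "\<forall>p<d. \<beta> p \<ge> 0 \<and> w p \<in> carrier_vec d"
    and tr: "\<forall>A \<in> carrier_mat d d. trace_op (A * M) = (\<Sum>p<d. complex_of_real (\<beta> p) * cinner d (w p) (A *\<^sub>v w p))"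
    using psd_trace_mult_eq_sum_forms[OF M] .
  have "e * tr_re X M = (\<Sum>p<d. \<beta> p * (e * Re (cinner d (w p) (X *\<^sub>v w p))))"
    unfolding tr_re_def using tr X by (simp add: sum_distrib_left algebra_simps)
  also have "\<dots> \<le> (\<Sum>p<d. \<beta> p * (\<kappa> * Re (cinner d (w p) (Y *\<^sub>v w p))))"
    using wb le by (intro sum_mono mult_left_mono) auto
  also have "\<dots> = \<kappa> * tr_re Y M"
    unfolding tr_re_def using tr Y by (simp add: sum_distrib_left algebra_simps)
  finally show ?thesis .
qed

lemma trace_op_mono:
  assumes X: "X \<in> carrier_mat d d" and Y: "Y \<in> carrier_mat d d"
    and le: "\<forall>v\<in>carrier_vec d. e * Re (cinner d v (X *\<^sub>v v)) \<le> \<kappa> * Re (cinner d v (Y *\<^sub>v v))"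
  shows "e * Re (trace_op X) \<le> \<kappa> * Re (trace_op Y)"
  using psd_trace_mult_mono[OF psd_op_one X Y le] X Y by (simp add: tr_re_def)

lemma psd_trace_mult_nonneg:
  assumes "psd_op d A" "psd_op d M"
  shows "tr_re A M \<ge> 0"
  using psd_trace_mult_mono[OF assms(2) zero_carrier_mat psd_op_carrier[OF assms(1)], of 0 1]
    psd_op_form_nonneg[OF assms(1)] by simp

subsection \<open>Rank-one measurement elements\<close>

definition rank_one_mat :: "nat \<Rightarrow> complex \<Rightarrow> complex vec \<Rightarrow> complex mat" where
  "rank_one_mat d t u = mat d d (\<lambda>(a, b). t * (u $ a * cnj (u $ b)))"

lemma rank_one_mat_carrier [simp]: "rank_one_mat d t u \<in> carrier_mat d d"
  unfolding rank_one_mat_def by simp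

lemma rank_one_mat_index: "a < d \<Longrightarrow> b < d \<Longrightarrow> rank_one_mat d t u $$ (a, b) = t * (u $ a * cnj (u $ b))"
  unfolding rank_one_mat_def by simp

lemma trace_op_mult_rank_one:
  assumes A: "A \<in> carrier_mat d d" and u: "u \<in> carrier_vec d"
  shows "trace_op (A * rank_one_mat d t u) = t * cinner d u (A *\<^sub>v u)"
proof -
  have "trace_op (A * rank_one_mat d t u) = (\<Sum>a<d. \<Sum>b<d. A $$ (a, b) * (t * (u $ b * cnj (u $ a))))"
    unfolding trace_op_mult[OF A rank_one_mat_carrier] by (intro sum.cong refl) (simp add: rank_one_mat_index)
  also have "\<dots> = t * (\<Sum>a<d. \<Sum>b<d. cnj (u $ a) * A $$ (a, b) * u $ b)"
    by (simp add: sum_distrib_left algebra_simps)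
  finally show ?thesis
    by (simp add: cinner_form_expand[OF A u])
qed

lemma tr_re_rank_one:
  assumes "A \<in> carrier_mat d d" "u \<in> carrier_vec d"
  shows "tr_re A (rank_one_mat d (complex_of_real t) u) = t * Re (cinner d u (A *\<^sub>v u))"
  unfolding tr_re_def trace_op_mult_rank_one[OF assms] by simp

lemma cinner_rank_one_form:
  assumes v: "v \<in> carrier_vec d"
  shows "cinner d v (rank_one_mat d t u *\<^sub>v v) = t * complex_of_real ((cmod (cinner d u v))\<^sup>2)"
proof -
  have "cinner d v (rank_one_mat d t u *\<^sub>v v) =
      t * ((\<Sum>a<d. cnj (v $ a) * u $ a) * (\<Sum>b<d. cnj (u $ b) * v $ b))"
    unfolding cinner_form_expand[OF rank_one_mat_carrier v] sum_product
    by (simp add: rank_one_mat_index sum_distrib_left algebra_simps)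
  also have "\<dots> = t * (cinner d v u * cinner d u v)"
    unfolding cinner_def ..
  also have "cinner d v u * cinner d u v = complex_of_real ((cmod (cinner d u v))\<^sup>2)"
    by (metis cnj_mult_self cnj_cinner)
  finally show ?thesis .
qed

lemma psd_rank_one_mat: "t \<ge> 0 \<Longrightarrow> psd_op d (rank_one_mat d (complex_of_real t) u)"
  unfolding psd_op_iff_form hermitian_op_def by (auto simp: rank_one_mat_index cinner_rank_one_form)

lemma cauchy_schwarz:
  assumes u: "u \<in> carrier_vec d" and v: "v \<in> carrier_vec d"
  shows "(cmod (cinner d u v))\<^sup>2 \<le> Re (cinner d u u) * Re (cinner d v v)"
proof (cases "u = 0\<^sub>v d")
  case True
  then show ?thesis
    by (simp add: cinner_self_nonneg)
next
  case False
  define q where "q = Re (cinner d u u)"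
  have q: "q > 0"
    unfolding q_def using cinner_self_pos[OF u False] .
  have "orthonormal d 1 (\<lambda>_. normalize_vec d u)"
    using normalize_vec_unit[OF u False] unfolding orthonormal_def by auto
  from bessel_inequality[OF this v]
  have "(cmod (cinner d (normalize_vec d u) v))\<^sup>2 \<le> Re (cinner d v v)"
    by simp
  moreover have "cinner d (normalize_vec d u) v = complex_of_real (1 / sqrt q) * cinner d u v"
    using u unfolding normalize_vec_def q_def by (simp add: cinner_smult_left)
  moreover have "cmod (complex_of_real (1 / sqrt q) * cinner d u v) = 1 / sqrt q * cmod (cinner d u v)"
    using q by (simp only: norm_mult norm_of_real) simp
  moreover have "(1 / sqrt q * cmod (cinner d u v))\<^sup>2 = (cmod (cinner d u v))\<^sup>2 / q"
    using q by (simp add: power_mult_distrib power_divide)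
  ultimately have "(cmod (cinner d u v))\<^sup>2 / q \<le> Re (cinner d v v)"
    by simp
  with q show ?thesis
    unfolding q_def[symmetric] by (simp add: divide_le_eq mult.commute)
qed

definition inconclusive_elem :: "nat \<Rightarrow> nat \<Rightarrow> (nat \<Rightarrow> complex mat) \<Rightarrow> complex mat" where
  "inconclusive_elem d n M = mat d d (\<lambda>(a, b). (1\<^sub>m d :: complex mat) $$ (a, b) - (\<Sum>j=1..n. M j $$ (a, b)))"

lemma cinner_inconclusive_elem_form:
  assumes M: "\<forall>j\<in>{1..n}. M j \<in> carrier_mat d d" and v: "v \<in> carrier_vec d"
  shows "cinner d v (inconclusive_elem d n M *\<^sub>v v) = cinner d v v - (\<Sum>j=1..n. cinner d v (M j *\<^sub>v v))"
proof -
  have Mq: "inconclusive_elem d n M \<in> carrier_mat d d"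
    unfolding inconclusive_elem_def by simp
  have "cinner d v (inconclusive_elem d n M *\<^sub>v v) =
      (\<Sum>a<d. \<Sum>b<d. cnj (v $ a) * (1\<^sub>m d :: complex mat) $$ (a, b) * v $ b)
    - (\<Sum>a<d. \<Sum>b<d. \<Sum>j=1..n. cnj (v $ a) * M j $$ (a, b) * v $ b)"
    unfolding cinner_form_expand[OF Mq v]
    by (simp add: inconclusive_elem_def sum_subtractf[symmetric] algebra_simps sum_distrib_left
        sum_distrib_right)
  also have "(\<Sum>a<d. \<Sum>b<d. \<Sum>j=1..n. cnj (v $ a) * M j $$ (a, b) * v $ b)
      = (\<Sum>j=1..n. \<Sum>a<d. \<Sum>b<d. cnj (v $ a) * M j $$ (a, b) * v $ b)"
    by (subst sum.swap) (rule sum.cong[OF refl], rule sum.swap)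
  also have "\<dots> = (\<Sum>j=1..n. cinner d v (M j *\<^sub>v v))"
    using M by (intro sum.cong refl) (simp add: cinner_form_expand[OF _ v])
  also have "(\<Sum>a<d. \<Sum>b<d. cnj (v $ a) * (1\<^sub>m d :: complex mat) $$ (a, b) * v $ b) = cinner d v v"
    using cinner_form_expand[OF one_carrier_mat v] v by simp
  finally show ?thesis .
qed

text \<open>Scaled rank-one elements \<open>t\<^sub>j u\<^sub>j u\<^sub>j\<^sup>*\<close> complete to a measurement as soon as
  \<open>\<Sum>\<^sub>j t\<^sub>j \<parallel>u\<^sub>j\<parallel>\<^sup>2 \<le> 1\<close>: by Cauchy-Schwarz, \<open>\<Sum>\<^sub>j t\<^sub>j u\<^sub>j u\<^sub>j\<^sup>* \<le> (\<Sum>\<^sub>j t\<^sub>j \<parallel>u\<^sub>j\<parallel>\<^sup>2) \<one>\<close>.\<close>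

lemma measurement_rank_one:
  assumes u: "\<forall>j\<in>{1..n}. u j \<in> carrier_vec d" and t: "\<forall>j\<in>{1..n}. t j \<ge> 0"
    and s: "(\<Sum>j=1..n. t j * Re (cinner d (u j) (u j))) \<le> 1"
  defines "M \<equiv> \<lambda>j. rank_one_mat d (complex_of_real (t j)) (u j)"
  shows "measurement d n (inconclusive_elem d n M) M"
proof -
  have Mc: "\<forall>j\<in>{1..n}. M j \<in> carrier_mat d d"
    unfolding M_def by simp
  have herm: "hermitian_op d (inconclusive_elem d n M)"
    unfolding hermitian_op_def inconclusive_elem_def M_def
    by (auto simp: rank_one_mat_index mult.commute intro!: sum.cong)
  have "Re (cinner d v (inconclusive_elem d n M *\<^sub>v v)) \<ge> 0" if v: "v \<in> carrier_vec d" for v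
  proof -
    have "(\<Sum>j=1..n. t j * (cmod (cinner d (u j) v))\<^sup>2) \<le>
        (\<Sum>j=1..n. t j * (Re (cinner d (u j) (u j)) * Re (cinner d v v)))"
      using t u cauchy_schwarz[OF _ v] by (intro sum_mono mult_left_mono) auto
    also have "\<dots> = (\<Sum>j=1..n. t j * Re (cinner d (u j) (u j))) * Re (cinner d v v)"
      by (simp add: sum_distrib_right mult.assoc)
    also have "\<dots> \<le> Re (cinner d v v)"
      using mult_right_mono[OF s cinner_self_nonneg] by simp
    moreover have "Re (cinner d v (inconclusive_elem d n M *\<^sub>v v)) =
        Re (cinner d v v) - (\<Sum>j=1..n. t j * (cmod (cinner d (u j) v))\<^sup>2)"
      unfolding cinner_inconclusive_elem_form[OF Mc v] by (simp add: M_def cinner_rank_one_form[OF v])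
    ultimately show ?thesis
      by simp
  qed
  with herm have "psd_op d (inconclusive_elem d n M)"
    unfolding psd_op_iff_form by blast
  moreover have "\<forall>j\<in>{1..n}. psd_op d (M j)"
    unfolding M_def using t psd_rank_one_mat by auto
  ultimately show ?thesis
    unfolding measurement_def by (auto simp: inconclusive_elem_def)
qed

lemma measurement_trace_le_one:
  assumes m: "measurement d n Mq M" and X: "psd_op d X"
    and trX: "Re (trace_op X) = 1" and i: "i \<in> {1..n}"
  shows "tr_re X (M i) \<le> 1"
proof -
  have Xc: "X \<in> carrier_mat d d"
    using X by (rule psd_op_carrier)
  have psd: "psd_op d Mq" "\<forall>j\<in>{1..n}. psd_op d (M j)"
    using m unfolding measurement_def by blast+
  then have Mc: "Mq \<in> carrier_mat d d" "\<forall>j\<in>{1..n}. M j \<in> carrier_mat d d"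
    by (auto intro: psd_op_carrier)
  have one: "Mq $$ (b, a) + (\<Sum>j=1..n. M j $$ (b, a)) = (if a = b then 1 else 0)"
    if "a < d" "b < d" for a b
    using m that unfolding measurement_def by auto
  have "(\<Sum>j=1..n. trace_op (X * M j)) = (\<Sum>j=1..n. \<Sum>a<d. \<Sum>b<d. X $$ (a, b) * M j $$ (b, a))"
    using Mc by (simp add: trace_op_mult[OF Xc])
  also have "\<dots> = (\<Sum>a<d. \<Sum>b<d. \<Sum>j=1..n. X $$ (a, b) * M j $$ (b, a))"
    by (subst sum.swap) (rule sum.cong[OF refl], rule sum.swap)
  finally have "trace_op (X * Mq) + (\<Sum>j=1..n. trace_op (X * M j)) =
      (\<Sum>a<d. \<Sum>b<d. X $$ (a, b) * (Mq $$ (b, a) + (\<Sum>j=1..n. M j $$ (b, a))))"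
    using Mc by (simp add: trace_op_mult[OF Xc] sum.distrib sum_distrib_left distrib_left)
  also have "\<dots> = (\<Sum>a<d. \<Sum>b<d. X $$ (a, b) * (if a = b then 1 else 0))"
  proof (intro sum.cong refl)
    fix a b assume "a \<in> {..<d}" "b \<in> {..<d}"
    then show "X $$ (a, b) * (Mq $$ (b, a) + (\<Sum>j=1..n. M j $$ (b, a))) =
        X $$ (a, b) * (if a = b then 1 else 0)"
      using one[of a b] by simp
  qed
  also have "\<dots> = (\<Sum>a<d. X $$ (a, a))"
    by (intro sum.cong refl sum_lessThan_delta) simp
  also have "\<dots> = trace_op X"
    unfolding trace_op_def using Xc by simp
  finally have "tr_re X Mq + (\<Sum>j=1..n. tr_re X (M j)) = 1"
    using trX unfolding tr_re_def by (metis Re_sum plus_complex.sel(1))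
  moreover have "tr_re X (M i) \<le> (\<Sum>j=1..n. tr_re X (M j))"
    using psd_trace_mult_nonneg[OF X] psd i by (intro member_le_sum) auto
  moreover have "tr_re X Mq \<ge> 0"
    using psd_trace_mult_nonneg[OF X psd(1)] .
  ultimately show ?thesis by linarith
qed

subsection \<open>Maximising a quadratic form relative to another\<close>

lemma hermitian_max_eigenvector:
  assumes K: "hermitian_op d K" and d: "d > 0"
  obtains w \<kappa> where "w \<in> carrier_vec d" "cinner d w w = 1" "K *\<^sub>v w = complex_of_real \<kappa> \<cdot>\<^sub>v w"
    "\<forall>y\<in>carrier_vec d. Re (cinner d y (K *\<^sub>v y)) \<le> \<kappa> * Re (cinner d y y)"
proof -
  have Kc: "K \<in> carrier_mat d d"
    using K by (rule hermitian_op_carrier)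
  obtain v \<mu> where o: "orthonormal d d v" and ev: "\<forall>p<d. K *\<^sub>v v p = complex_of_real (\<mu> p) \<cdot>\<^sub>v v p"
    using hermitian_eigenbasis[OF K] .
  have "Max (\<mu> ` {..<d}) \<in> \<mu> ` {..<d}"
    using d by (intro Max_in) auto
  then obtain p0 where p0: "p0 < d" "\<mu> p0 = Max (\<mu> ` {..<d})"
    by (metis imageE lessThan_iff)
  have "Re (cinner d y (K *\<^sub>v y)) \<le> \<mu> p0 * Re (cinner d y y)" if y: "y \<in> carrier_vec d" for y
  proof -
    have "Re (cinner d y (K *\<^sub>v y)) = (\<Sum>p<d. \<mu> p * (cmod (cinner d (v p) y))\<^sup>2)"
      unfolding eigenbasis_form[OF Kc o ev y] by simp
    also have "\<dots> \<le> (\<Sum>p<d. \<mu> p0 * (cmod (cinner d (v p) y))\<^sup>2)"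
      unfolding p0(2) by (intro sum_mono mult_right_mono) (auto intro: Max_ge)
    also have "\<dots> = \<mu> p0 * Re (cinner d y y)"
      unfolding parseval[OF o y] by (simp add: sum_distrib_left)
    finally show ?thesis .
  qed
  with orthonormalD[OF o p0(1)] ev p0(1) show ?thesis
    using that by blast
qed

lemma cinner_lincomb_form:
  assumes A: "A \<in> carrier_mat d d" and b: "\<And>j. j < k \<Longrightarrow> b j \<in> carrier_vec d"
  shows "cinner d (vec_lincomb d k c b) (A *\<^sub>v vec_lincomb d k c b) =
    (\<Sum>j<k. \<Sum>l<k. cnj (c j) * c l * cinner d (b j) (A *\<^sub>v b l))"
proof -
  have "cinner d (vec_lincomb d k c b) (A *\<^sub>v vec_lincomb d k c b) =
      cinner d (vec_lincomb d k c b) (vec_lincomb d k c (\<lambda>l. A *\<^sub>v b l))"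
    by (simp only: mult_mat_vec_lincomb[OF A b])
  also have "\<dots> = (\<Sum>j<k. cnj (c j) * (\<Sum>l<k. c l * cinner d (b j) (A *\<^sub>v b l)))"
    by (simp only: cinner_lincomb_left) (simp only: cinner_lincomb_right)
  finally show ?thesis
    by (simp add: sum_distrib_left mult.assoc)
qed

text \<open>Coordinates with respect to an orthonormal eigenbasis \<open>b\<close>, \<open>\<mu>\<close> of \<open>R \<ge> 0\<close>:
  \<open>whiten v\<close> is \<open>R\<^sup>1\<^sup>/\<^sup>2 v\<close>, \<open>unwhiten\<close> applies \<open>R\<^sup>-\<^sup>1\<^sup>/\<^sup>2\<close> and \<open>whitened_mat P\<close> is the matrix of
  \<open>R\<^sup>-\<^sup>1\<^sup>/\<^sup>2 P R\<^sup>-\<^sup>1\<^sup>/\<^sup>2\<close>.  Here \<open>R\<^sup>-\<^sup>1\<^sup>/\<^sup>2\<close> is the pseudo-inverse, for free since \<open>1 / sqrt 0 = 0\<close>.\<close>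

definition whiten :: "nat \<Rightarrow> (nat \<Rightarrow> complex vec) \<Rightarrow> (nat \<Rightarrow> real) \<Rightarrow> complex vec \<Rightarrow> complex vec" where
  "whiten d b \<mu> v = vec d (\<lambda>j. complex_of_real (sqrt (\<mu> j)) * cinner d (b j) v)"

definition unwhiten :: "nat \<Rightarrow> (nat \<Rightarrow> complex vec) \<Rightarrow> (nat \<Rightarrow> real) \<Rightarrow> complex vec \<Rightarrow> complex vec" where
  "unwhiten d b \<mu> w = vec_lincomb d d (\<lambda>j. complex_of_real (1 / sqrt (\<mu> j)) * w $ j) b"

definition whitened_mat :: "nat \<Rightarrow> (nat \<Rightarrow> complex vec) \<Rightarrow> (nat \<Rightarrow> real) \<Rightarrow> complex mat \<Rightarrow> complex mat" where
  "whitened_mat d b \<mu> P = mat d d (\<lambda>(j, l).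
     complex_of_real (1 / sqrt (\<mu> j) * (1 / sqrt (\<mu> l))) * cinner d (b j) (P *\<^sub>v b l))"

lemma whiten_carrier [simp]: "whiten d b \<mu> v \<in> carrier_vec d"
  and whitened_mat_carrier [simp]: "whitened_mat d b \<mu> P \<in> carrier_mat d d"
  unfolding whiten_def whitened_mat_def by simp_all

lemma whitened_mat_hermitian:
  assumes P: "hermitian_op d P" and ob: "orthonormal d d b"
  shows "hermitian_op d (whitened_mat d b \<mu> P)"
proof -
  have "cnj (cinner d (b j) (P *\<^sub>v b l)) = cinner d (b l) (P *\<^sub>v b j)" if "j < d" "l < d" for j l
    unfolding cnj_cinner using hermitian_cinner_adjoint[OF P orthonormalD(1)[OF ob that(2)]
        orthonormalD(1)[OF ob that(1)]] .
  then show ?thesis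
    unfolding hermitian_op_def whitened_mat_def by (simp add: mult.commute)
qed

lemma cinner_whiten_self:
  assumes R: "R \<in> carrier_mat d d" and ob: "orthonormal d d b"
    and ev: "\<forall>j<d. R *\<^sub>v b j = complex_of_real (\<mu> j) \<cdot>\<^sub>v b j" and mu: "\<forall>j<d. \<mu> j \<ge> 0"
    and v: "v \<in> carrier_vec d"
  shows "cinner d v (R *\<^sub>v v) = cinner d (whiten d b \<mu> v) (whiten d b \<mu> v)"
proof -
  have "cinner d v (R *\<^sub>v v) = of_real (\<Sum>j<d. \<mu> j * (cmod (cinner d (b j) v))\<^sup>2)"
    by (simp only: eigenbasis_form[OF R ob ev v] of_real_sum)
  also have "(\<Sum>j<d. \<mu> j * (cmod (cinner d (b j) v))\<^sup>2) = (\<Sum>j<d. (cmod (whiten d b \<mu> v $ j))\<^sup>2)"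
    using mu by (intro sum.cong refl) (simp add: whiten_def norm_mult power_mult_distrib)
  finally show ?thesis
    by (simp only: cinner_self)
qed

lemma cinner_whitened_mat_form:
  assumes P: "hermitian_op d P" and ob: "orthonormal d d b" and mu: "\<forall>j<d. \<mu> j \<ge> 0"
    and ker: "\<forall>j<d. \<mu> j = 0 \<longrightarrow> P *\<^sub>v b j = 0\<^sub>v d" and v: "v \<in> carrier_vec d"
  shows "cinner d v (P *\<^sub>v v) =
    cinner d (whiten d b \<mu> v) (whitened_mat d b \<mu> P *\<^sub>v whiten d b \<mu> v)"
proof -
  have Pc: "P \<in> carrier_mat d d"
    using P by (rule hermitian_op_carrier)
  have bc: "\<And>j. j < d \<Longrightarrow> b j \<in> carrier_vec d"
    using orthonormalD(1)[OF ob] .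
  define c where "c j = cinner d (b j) v" for j
  define G where "G j l = cinner d (b j) (P *\<^sub>v b l)" for j l
  have G0: "G j l = 0" if "j < d" "l < d" "\<mu> j = 0 \<or> \<mu> l = 0" for j l
  proof -
    have "G j l = cinner d (P *\<^sub>v b j) (b l)"
      unfolding G_def using hermitian_cinner_adjoint[OF P bc[OF that(1)] bc[OF that(2)]] by simp
    with that ker show ?thesis
      unfolding G_def by auto
  qed
  have coef: "cnj (whiten d b \<mu> v $ j) * whitened_mat d b \<mu> P $$ (j, l) * whiten d b \<mu> v $ l =
      cnj (c j) * c l * G j l" if "j < d" "l < d" for j l
  proof (cases "\<mu> j = 0 \<or> \<mu> l = 0")
    case True
    with that G0[OF that] show ?thesis
      unfolding whiten_def whitened_mat_def c_def G_def by auto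
  next
    case False
    then have "complex_of_real (sqrt (\<mu> j)) \<noteq> 0" "complex_of_real (sqrt (\<mu> l)) \<noteq> 0"
      using mu that by auto
    with that show ?thesis
      unfolding whiten_def whitened_mat_def c_def G_def by (simp add: field_simps)
  qed
  have "cinner d v (P *\<^sub>v v) = cinner d (vec_lincomb d d c b) (P *\<^sub>v vec_lincomb d d c b)"
    unfolding c_def using orthonormal_expansion[OF ob v] by simp
  also have "\<dots> = (\<Sum>j<d. \<Sum>l<d. cnj (c j) * c l * G j l)"
    unfolding G_def by (rule cinner_lincomb_form[OF Pc bc])
  also have "\<dots> = cinner d (whiten d b \<mu> v) (whitened_mat d b \<mu> P *\<^sub>v whiten d b \<mu> v)"
    unfolding cinner_form_expand[OF whitened_mat_carrier whiten_carrier] by (simp add: coef)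
  finally show ?thesis .
qed

lemma whitened_mat_eigenvector_vanishes:
  assumes Kw: "whitened_mat d b \<mu> P *\<^sub>v w = \<kappa> \<cdot>\<^sub>v w" and \<kappa>: "\<kappa> \<noteq> 0"
    and w: "w \<in> carrier_vec d" and j: "j < d" "\<mu> j = 0"
  shows "w $ j = 0"
proof -
  have "\<kappa> * w $ j = (whitened_mat d b \<mu> P *\<^sub>v w) $ j"
    using Kw w j by simp
  also have "\<dots> = 0"
    using j w by (subst mult_mat_vec_index[OF whitened_mat_carrier w j(1)])
      (simp add: whitened_mat_def)
  finally show ?thesis
    using \<kappa> by simp
qed

lemma whiten_unwhiten:
  assumes ob: "orthonormal d d b" and mu: "\<forall>j<d. \<mu> j \<ge> 0" and w: "w \<in> carrier_vec d"
    and supp: "\<forall>j<d. \<mu> j = 0 \<longrightarrow> w $ j = 0"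
  shows "whiten d b \<mu> (unwhiten d b \<mu> w) = w"
proof (rule eq_vecI)
  fix j assume "j < dim_vec w"
  with w have j: "j < d" by simp
  with mu supp show "whiten d b \<mu> (unwhiten d b \<mu> w) $ j = w $ j"
    by (cases "\<mu> j = 0") (auto simp: whiten_def unwhiten_def cinner_orthonormal_lincomb[OF ob j])
qed (use w in \<open>simp add: whiten_def\<close>)

lemma unwhiten_norm_le:
  assumes ob: "orthonormal d d b" and lam: "lam > 0" and mulam: "\<forall>j<d. \<mu> j \<noteq> 0 \<longrightarrow> lam \<le> \<mu> j"
  shows "Re (cinner d (unwhiten d b \<mu> w) (unwhiten d b \<mu> w)) \<le> Re (cinner d w w) / lam"
proof -
  have "cinner d (unwhiten d b \<mu> w) (unwhiten d b \<mu> w) =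
      (\<Sum>j<d. complex_of_real ((1 / sqrt (\<mu> j))\<^sup>2 * (cmod (w $ j))\<^sup>2))"
    unfolding unwhiten_def cinner_orthonormal_lincomb_self[OF ob]
    by (intro sum.cong refl) (simp only: cnj_mult_self norm_mult norm_of_real power_mult_distrib power2_abs)
  then have "Re (cinner d (unwhiten d b \<mu> w) (unwhiten d b \<mu> w)) =
      (\<Sum>j<d. (1 / sqrt (\<mu> j))\<^sup>2 * (cmod (w $ j))\<^sup>2)"
    by (simp only: Re_sum Re_complex_of_real)
  also have "\<dots> \<le> (\<Sum>j<d. 1 / lam * (cmod (w $ j))\<^sup>2)"
  proof (intro sum_mono mult_right_mono)
    fix j assume "j \<in> {..<d}"
    then show "(1 / sqrt (\<mu> j))\<^sup>2 \<le> 1 / lam"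
      using mulam lam by (cases "\<mu> j = 0") (auto simp: power_divide frac_le)
  qed simp
  also have "\<dots> = Re (cinner d w w) / lam"
    by (simp add: Re_cinner_self sum_divide_distrib)
  finally show ?thesis .
qed

lemma relative_form_max:
  assumes R: "psd_op d R" and ob: "orthonormal d d b"
    and ev: "\<forall>j<d. R *\<^sub>v b j = complex_of_real (\<mu> j) \<cdot>\<^sub>v b j"
    and lam: "lam > 0" and mulam: "\<forall>j<d. \<mu> j \<noteq> 0 \<longrightarrow> lam \<le> \<mu> j"
    and P: "hermitian_op d P" and ker: "\<forall>j<d. \<mu> j = 0 \<longrightarrow> P *\<^sub>v b j = 0\<^sub>v d"
    and trP: "Re (trace_op P) > 0"
  obtains u \<kappa> where "u \<in> carrier_vec d"
    "\<forall>v\<in>carrier_vec d. Re (cinner d v (P *\<^sub>v v)) \<le> \<kappa> * Re (cinner d v (R *\<^sub>v v))"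
    "cinner d u (R *\<^sub>v u) = 1" "cinner d u (P *\<^sub>v u) = complex_of_real \<kappa>"
    "Re (cinner d u u) \<le> 1 / lam"
proof -
  have Rc: "R \<in> carrier_mat d d" and Pc: "P \<in> carrier_mat d d"
    using R P by (auto intro: psd_op_carrier hermitian_op_carrier)
  have mu: "\<forall>j<d. \<mu> j \<ge> 0"
    using mulam lam by force
  have "d > 0"
    using trP Pc by (cases d) (auto simp: trace_op_def)
  obtain w \<kappa> where w: "w \<in> carrier_vec d" "cinner d w w = 1"
    and Kw: "whitened_mat d b \<mu> P *\<^sub>v w = complex_of_real \<kappa> \<cdot>\<^sub>v w"
    and Kmax: "\<forall>y\<in>carrier_vec d. Re (cinner d y (whitened_mat d b \<mu> P *\<^sub>v y)) \<le> \<kappa> * Re (cinner d y y)"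
    using hermitian_max_eigenvector[OF whitened_mat_hermitian[OF P ob] \<open>d > 0\<close>] .
  have max: "\<forall>v\<in>carrier_vec d. Re (cinner d v (P *\<^sub>v v)) \<le> \<kappa> * Re (cinner d v (R *\<^sub>v v))"
    using Kmax by (simp add: cinner_whitened_mat_form[OF P ob mu ker] cinner_whiten_self[OF Rc ob ev mu])
  have "0 < Re (trace_op P)" by (fact trP)
  also have "\<dots> \<le> \<kappa> * Re (trace_op R)"
    using trace_op_mono[OF Pc Rc, of 1] max by simp
  finally have "\<kappa> > 0"
    using psd_trace_mult_nonneg[OF psd_op_one R] Rc by (simp add: tr_re_def zero_less_mult_iff)
  define u where "u = unwhiten d b \<mu> w"
  have "whiten d b \<mu> u = w"
    unfolding u_def using \<open>\<kappa> > 0\<close> whitened_mat_eigenvector_vanishes[OF Kw _ w(1)]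
    by (intro whiten_unwhiten[OF ob mu w(1)]) auto
  moreover have "u \<in> carrier_vec d"
    unfolding u_def unwhiten_def by simp
  moreover have "Re (cinner d u u) \<le> 1 / lam"
    using unwhiten_norm_le[OF ob lam mulam, of w] w(2) unfolding u_def by simp
  ultimately show ?thesis
    using max w Kw
    by (intro that) (simp_all add: cinner_whitened_mat_form[OF P ob mu ker]
        cinner_whiten_self[OF Rc ob ev mu] cinner_smult_right)
qed

subsection \<open>The average state\<close>

lemma rho0_carrier [simp]: "rho0 d n \<eta> \<rho> \<in> carrier_mat d d"
  and dim_row_rho0 [simp]: "dim_row (rho0 d n \<eta> \<rho>) = d"
  unfolding rho0_def by simp_all

lemma cinner_rho0_form:
  assumes \<rho>: "\<forall>i\<in>{1..n}. \<rho> i \<in> carrier_mat d d" and v: "v \<in> carrier_vec d"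
  shows "cinner d v (rho0 d n \<eta> \<rho> *\<^sub>v v) = (\<Sum>i=1..n. complex_of_real (\<eta> i) * cinner d v (\<rho> i *\<^sub>v v))"
proof -
  have "cinner d v (rho0 d n \<eta> \<rho> *\<^sub>v v) =
      (\<Sum>a<d. \<Sum>b<d. \<Sum>i=1..n. complex_of_real (\<eta> i) * (cnj (v $ a) * \<rho> i $$ (a, b) * v $ b))"
    unfolding cinner_form_expand[OF rho0_carrier v]
    by (intro sum.cong refl) (simp add: rho0_def sum_distrib_left sum_distrib_right algebra_simps)
  also have "\<dots> = (\<Sum>i=1..n. \<Sum>a<d. \<Sum>b<d. complex_of_real (\<eta> i) * (cnj (v $ a) * \<rho> i $$ (a, b) * v $ b))"
    by (subst sum.swap) (rule sum.cong[OF refl], rule sum.swap)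
  also have "\<dots> = (\<Sum>i=1..n. complex_of_real (\<eta> i) * cinner d v (\<rho> i *\<^sub>v v))"
    using \<rho> by (intro sum.cong refl) (simp add: cinner_form_expand[OF _ v] sum_distrib_left)
  finally show ?thesis .
qed

lemma rho0_psd:
  assumes \<rho>: "\<forall>i\<in>{1..n}. psd_op d (\<rho> i)" and \<eta>: "\<forall>i\<in>{1..n}. \<eta> i \<ge> 0"
  shows "psd_op d (rho0 d n \<eta> \<rho>)"
  unfolding psd_op_iff_form
proof (intro conjI ballI)
  have "cnj (\<rho> i $$ (j, k)) = \<rho> i $$ (k, j)" if "i \<in> {1..n}" "j < d" "k < d" for i j k
    using \<rho> that unfolding psd_op_def hermitian_op_def by metis
  then show "hermitian_op d (rho0 d n \<eta> \<rho>)"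
    unfolding hermitian_op_def rho0_def by (auto intro!: sum.cong)
  fix v :: "complex vec" assume v: "v \<in> carrier_vec d"
  have "Re (cinner d v (rho0 d n \<eta> \<rho> *\<^sub>v v)) = (\<Sum>i=1..n. \<eta> i * Re (cinner d v (\<rho> i *\<^sub>v v)))"
    using \<rho> by (simp add: cinner_rho0_form[OF _ v] psd_op_carrier)
  also have "\<dots> \<ge> 0"
    using \<rho> \<eta> psd_op_form_nonneg[OF _ v] by (intro sum_nonneg mult_nonneg_nonneg) auto
  finally show "Re (cinner d v (rho0 d n \<eta> \<rho> *\<^sub>v v)) \<ge> 0" .
qed

lemma rho0_trace:
  assumes \<rho>: "\<forall>i\<in>{1..n}. \<rho> i \<in> carrier_mat d d"
    and tr: "\<forall>i\<in>{1..n}. trace_op (\<rho> i) = 1" and \<eta>: "(\<Sum>i=1..n. \<eta> i) = 1"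
  shows "trace_op (rho0 d n \<eta> \<rho>) = 1"
proof -
  have "trace_op (rho0 d n \<eta> \<rho>) = (\<Sum>a<d. \<Sum>i=1..n. complex_of_real (\<eta> i) * \<rho> i $$ (a, a))"
    unfolding trace_op_def by (simp add: rho0_def)
  also have "\<dots> = (\<Sum>i=1..n. complex_of_real (\<eta> i) * trace_op (\<rho> i))"
    using \<rho> by (subst sum.swap) (auto simp: trace_op_def sum_distrib_left intro!: sum.cong)
  also have "\<dots> = complex_of_real (\<Sum>i=1..n. \<eta> i)"
    using tr by simp
  finally show ?thesis
    using \<eta> by (metis of_real_1)
qed

lemma rho0_kernel:
  assumes \<rho>: "\<forall>k\<in>{1..n}. psd_op d (\<rho> k)" and \<eta>: "\<forall>k\<in>{1..n}. \<eta> k > 0"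
    and x: "x \<in> carrier_vec d" and zero: "rho0 d n \<eta> \<rho> *\<^sub>v x = 0\<^sub>v d" and i: "i \<in> {1..n}"
  shows "\<rho> i *\<^sub>v x = 0\<^sub>v d"
proof (rule psd_form_eq_0_imp_kernel)
  show "psd_op d (\<rho> i)" "x \<in> carrier_vec d"
    using \<rho> i x by auto
  have nonneg: "\<forall>k\<in>{1..n}. \<eta> k * Re (cinner d x (\<rho> k *\<^sub>v x)) \<ge> 0"
    using \<rho> \<eta> psd_op_form_nonneg[OF _ x] by (simp add: less_imp_le)
  have "(\<Sum>k=1..n. \<eta> k * Re (cinner d x (\<rho> k *\<^sub>v x))) = 0"
    using arg_cong[OF cinner_rho0_form[of n \<rho> d x \<eta>], of Re] \<rho> x zero
    by (simp add: psd_op_carrier)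
  then have "\<forall>k\<in>{1..n}. \<eta> k * Re (cinner d x (\<rho> k *\<^sub>v x)) = 0"
    using nonneg by (subst (asm) sum_nonneg_eq_0_iff) auto
  then have "\<eta> i * Re (cinner d x (\<rho> i *\<^sub>v x)) = 0"
    using i by blast
  moreover have "\<eta> i > 0"
    using \<eta> i by blast
  ultimately show "Re (cinner d x (\<rho> i *\<^sub>v x)) = 0"
    by simp
qed

subsection \<open>Maximum confidence\<close>

lemma conf_eqI:
  assumes m: "measurement d n Mq M" and i: "i \<in> {1..n}" and \<rho>: "\<rho> i \<in> carrier_mat d d"
    and le: "\<forall>v\<in>carrier_vec d. \<eta> i * Re (cinner d v (\<rho> i *\<^sub>v v)) \<le> \<kappa> * Re (cinner d v (rho0 d n \<eta> \<rho> *\<^sub>v v))"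
    and pos: "tr_re (rho0 d n \<eta> \<rho>) (M i) > 0"
    and eq: "\<eta> i * tr_re (\<rho> i) (M i) = \<kappa> * tr_re (rho0 d n \<eta> \<rho>) (M i)"
  shows "conf d n \<eta> \<rho> i = \<kappa>"
  unfolding conf_def
proof (rule cSup_eq_maximum)
  show "\<kappa> \<in> {\<eta> i * tr_re (\<rho> i) (M i) / tr_re (rho0 d n \<eta> \<rho>) (M i) |Mq M.
      measurement d n Mq M \<and> 0 < tr_re (rho0 d n \<eta> \<rho>) (M i)}"
    using m pos eq by force
next
  fix x assume "x \<in> {\<eta> i * tr_re (\<rho> i) (M i) / tr_re (rho0 d n \<eta> \<rho>) (M i) |Mq M.
      measurement d n Mq M \<and> 0 < tr_re (rho0 d n \<eta> \<rho>) (M i)}"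
  then obtain Mq' M' where x: "x = \<eta> i * tr_re (\<rho> i) (M' i) / tr_re (rho0 d n \<eta> \<rho>) (M' i)"
    and m': "measurement d n Mq' M'" and pos': "tr_re (rho0 d n \<eta> \<rho>) (M' i) > 0"
    by blast
  have "psd_op d (M' i)"
    using m' i unfolding measurement_def by blast
  from psd_trace_mult_mono[OF this \<rho> rho0_carrier le]
  show "x \<le> \<kappa>"
    unfolding x using pos' by (simp add: divide_le_eq)
qed

lemma cinner_form_smult_diff:
  assumes A: "A \<in> carrier_mat d d" and B: "B \<in> carrier_mat d d" and v: "v \<in> carrier_vec d"
  shows "cinner d v ((a \<cdot>\<^sub>m A - b \<cdot>\<^sub>m B) *\<^sub>v v) = a * cinner d v (A *\<^sub>v v) - b * cinner d v (B *\<^sub>v v)"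
proof -
  have C: "a \<cdot>\<^sub>m A - b \<cdot>\<^sub>m B \<in> carrier_mat d d"
    using B by (intro minus_carrier_mat smult_carrier_mat)
  show ?thesis
    unfolding cinner_form_expand[OF C v] cinner_form_expand[OF A v] cinner_form_expand[OF B v]
    using A B by (simp add: sum_subtractf sum_distrib_left algebra_simps)
qed

definition max_conf_vector :: "nat \<Rightarrow> nat \<Rightarrow> (nat \<Rightarrow> real) \<Rightarrow> (nat \<Rightarrow> complex mat) \<Rightarrow> nat \<Rightarrow>
    complex vec \<Rightarrow> real \<Rightarrow> bool" where
  "max_conf_vector d n \<eta> \<rho> i u \<kappa> \<longleftrightarrow> u \<in> carrier_vec d \<and>
     (\<forall>v\<in>carrier_vec d. Re (cinner d v (\<rho> i *\<^sub>v v)) \<le> \<kappa> * Re (cinner d v (rho0 d n \<eta> \<rho> *\<^sub>v v))) \<and>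
     cinner d u (rho0 d n \<eta> \<rho> *\<^sub>v u) = 1 \<and> cinner d u (\<rho> i *\<^sub>v u) = complex_of_real \<kappa>"

lemma max_conf_vector_norm_pos:
  assumes "max_conf_vector d n \<eta> \<rho> i u \<kappa>"
  shows "Re (cinner d u u) > 0"
proof (rule cinner_self_pos)
  show "u \<in> carrier_vec d" "u \<noteq> 0\<^sub>v d"
    using assms unfolding max_conf_vector_def by auto
qed

lemma rank_one_MC_element:
  assumes m: "measurement d n Mq M" and i: "i \<in> {1..n}" and \<eta>: "\<eta> i \<ge> 0"
    and Mi: "M i = rank_one_mat d (complex_of_real t) u" and t: "t > 0"
    and \<rho>: "psd_op d (\<rho> i)" and u: "max_conf_vector d n \<eta> \<rho> i u \<kappa>"
  shows "conf d n \<eta> \<rho> i = \<eta> i * \<kappa>" and "M i \<in> MC_set d n \<eta> \<rho> i"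
proof -
  have \<rho>c: "\<rho> i \<in> carrier_mat d d"
    using \<rho> by (rule psd_op_carrier)
  have uc: "u \<in> carrier_vec d"
    and le: "\<forall>v\<in>carrier_vec d. Re (cinner d v (\<rho> i *\<^sub>v v)) \<le> \<kappa> * Re (cinner d v (rho0 d n \<eta> \<rho> *\<^sub>v v))"
    and uR: "cinner d u (rho0 d n \<eta> \<rho> *\<^sub>v u) = 1" and u\<rho>: "cinner d u (\<rho> i *\<^sub>v u) = complex_of_real \<kappa>"
    using u unfolding max_conf_vector_def by auto
  have trR: "tr_re (rho0 d n \<eta> \<rho>) (M i) = t"
    unfolding Mi tr_re_rank_one[OF rho0_carrier uc] uR by simp
  have tr\<rho>: "tr_re (\<rho> i) (M i) = t * \<kappa>"
    unfolding Mi tr_re_rank_one[OF \<rho>c uc] u\<rho> by simp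
  show conf: "conf d n \<eta> \<rho> i = \<eta> i * \<kappa>"
  proof (rule conf_eqI[OF m])
    show "\<forall>v\<in>carrier_vec d. \<eta> i * Re (cinner d v (\<rho> i *\<^sub>v v)) \<le> \<eta> i * \<kappa> * Re (cinner d v (rho0 d n \<eta> \<rho> *\<^sub>v v))"
      using le \<eta> by (simp add: mult.assoc mult_left_mono)
  qed (use i \<rho>c trR tr\<rho> t in simp_all)
  have "trace_op ((complex_of_real (conf d n \<eta> \<rho> i) \<cdot>\<^sub>m rho0 d n \<eta> \<rho> - complex_of_real (\<eta> i) \<cdot>\<^sub>m \<rho> i) * M i) = 0"
    unfolding Mi conf using \<rho>c uc uR u\<rho>
    by (subst trace_op_mult_rank_one) (simp_all add: cinner_form_smult_diff minus_carrier_mat)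
  moreover have "psd_op d (M i)"
    unfolding Mi using t by (simp add: psd_rank_one_mat)
  ultimately show "M i \<in> MC_set d n \<eta> \<rho> i"
    unfolding MC_set_def by simp
qed

lemma success_le_pG:
  assumes ens: "ensemble d n \<eta> \<rho>" and MC: "MC_measurement d n \<eta> \<rho> Mq M"
  shows "(\<Sum>i=1..n. \<eta> i * tr_re (\<rho> i) (M i)) \<le> pG d n \<eta> \<rho>"
  unfolding pG_def
proof (rule cSup_upper)
  show "(\<Sum>i=1..n. \<eta> i * tr_re (\<rho> i) (M i)) \<in>
      {\<Sum>i=1..n. \<eta> i * tr_re (\<rho> i) (M i) |Mq M. MC_measurement d n \<eta> \<rho> Mq M}"
    using MC by blast
  show "bdd_above {\<Sum>i=1..n. \<eta> i * tr_re (\<rho> i) (M i) |Mq M. MC_measurement d n \<eta> \<rho> Mq M}"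
  proof (rule bdd_aboveI)
    fix y assume "y \<in> {\<Sum>i=1..n. \<eta> i * tr_re (\<rho> i) (M i) |Mq M. MC_measurement d n \<eta> \<rho> Mq M}"
    then obtain Mq' M' where y: "y = (\<Sum>i=1..n. \<eta> i * tr_re (\<rho> i) (M' i))"
      and m: "measurement d n Mq' M'"
      unfolding MC_measurement_def by blast
    have "y \<le> (\<Sum>i=1..n. \<eta> i * 1)"
      unfolding y
    proof (rule sum_mono)
      fix i assume i: "i \<in> {1..n}"
      then have "tr_re (\<rho> i) (M' i) \<le> 1"
        using ens measurement_trace_le_one[OF m]
        unfolding ensemble_def density_op_def by simp
      with ens i show "\<eta> i * tr_re (\<rho> i) (M' i) \<le> \<eta> i * 1"
        unfolding ensemble_def by (simp add: mult_left_mono)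
    qed
    with ens show "y \<le> 1"
      unfolding ensemble_def by simp
  qed
qed

lemma psd_eigenvalue_nonneg:
  assumes A: "psd_op d A" and ev: "eigenvalue A (complex_of_real lam)"
  shows "lam \<ge> 0"
proof -
  have Ac: "A \<in> carrier_mat d d"
    using A by (rule psd_op_carrier)
  obtain x where x: "x \<in> carrier_vec d" "x \<noteq> 0\<^sub>v d" "A *\<^sub>v x = complex_of_real lam \<cdot>\<^sub>v x"
    using ev Ac unfolding eigenvalue_def eigenvector_def by auto
  have "0 \<le> Re (cinner d x (A *\<^sub>v x))"
    using psd_op_form_nonneg[OF A x(1)] .
  also have "\<dots> = lam * Re (cinner d x x)"
    using x by (simp add: cinner_smult_right)
  finally show ?thesis
    using cinner_self_pos[OF x(1,2)] by (simp add: zero_le_mult_iff)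
qed

lemma ensemble_max_conf_vector:
  assumes ens: "ensemble d n \<eta> \<rho>" and i: "i \<in> {1..n}" and ob: "orthonormal d d b"
    and ev: "\<forall>j<d. rho0 d n \<eta> \<rho> *\<^sub>v b j = complex_of_real (\<mu> j) \<cdot>\<^sub>v b j"
    and lam: "lam > 0" and mulam: "\<forall>j<d. \<mu> j \<noteq> 0 \<longrightarrow> lam \<le> \<mu> j"
  obtains u \<kappa> where "max_conf_vector d n \<eta> \<rho> i u \<kappa>" "\<kappa> \<ge> 1" "Re (cinner d u u) \<le> 1 / lam"
proof -
  have \<rho>: "\<forall>k\<in>{1..n}. psd_op d (\<rho> k)" and tr\<rho>: "\<forall>k\<in>{1..n}. trace_op (\<rho> k) = 1"
    and \<eta>: "\<forall>k\<in>{1..n}. \<eta> k > 0" and sum\<eta>: "(\<Sum>k=1..n. \<eta> k) = 1"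
    using ens unfolding ensemble_def density_op_def by auto
  have R: "psd_op d (rho0 d n \<eta> \<rho>)"
    by (rule rho0_psd[OF \<rho>]) (use \<eta> in \<open>blast intro: less_imp_le\<close>)
  have trR: "trace_op (rho0 d n \<eta> \<rho>) = 1"
    by (rule rho0_trace[OF _ tr\<rho> sum\<eta>]) (use \<rho> psd_op_carrier in blast)
  have \<rho>i: "psd_op d (\<rho> i)" "trace_op (\<rho> i) = 1"
    using \<rho> tr\<rho> i by auto
  have "\<rho> i *\<^sub>v b j = 0\<^sub>v d" if "j < d" "\<mu> j = 0" for j
  proof (rule rho0_kernel[OF \<rho> \<eta> orthonormalD(1)[OF ob that(1)] _ i])
    show "rho0 d n \<eta> \<rho> *\<^sub>v b j = 0\<^sub>v d"
      using ev that orthonormalD(1)[OF ob that(1)] by auto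
  qed
  then have ker: "\<forall>j<d. \<mu> j = 0 \<longrightarrow> \<rho> i *\<^sub>v b j = 0\<^sub>v d"
    by blast
  have "Re (trace_op (\<rho> i)) > 0"
    using \<rho>i(2) by simp
  then obtain u \<kappa> where u: "max_conf_vector d n \<eta> \<rho> i u \<kappa>" and "Re (cinner d u u) \<le> 1 / lam"
    using relative_form_max[OF R ob ev lam mulam psd_op_hermitian[OF \<rho>i(1)] ker]
    unfolding max_conf_vector_def by blast
  moreover have "1 * Re (trace_op (\<rho> i)) \<le> \<kappa> * Re (trace_op (rho0 d n \<eta> \<rho>))"
    using trace_op_mono[OF psd_op_carrier[OF \<rho>i(1)] rho0_carrier, of 1 \<kappa>] u
    unfolding max_conf_vector_def by simp
  ultimately show ?thesis
    using that \<rho>i(2) trR by simp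
qed

lemma convex_sum_lower_bound:
  assumes "(\<Sum>i\<in>I. w i) = 1" "\<forall>i\<in>I. w i \<ge> 0" "\<forall>i\<in>I. c \<le> s i"
  shows "c \<le> (\<Sum>i\<in>I. w i * (s i :: real))"
proof -
  have "c = (\<Sum>i\<in>I. w i * c)"
    using assms(1) by (simp flip: sum_distrib_right)
  also have "\<dots> \<le> (\<Sum>i\<in>I. w i * s i)"
    using assms(2,3) by (intro sum_mono mult_left_mono) auto
  finally show ?thesis .
qed

lemma MC_measurement_of_max_conf_vectors:
  assumes ens: "ensemble d n \<eta> \<rho>" and lam: "lam > 0"
    and U: "\<And>i. i \<in> {1..n} \<Longrightarrow> max_conf_vector d n \<eta> \<rho> i (U i) (K i)"
    and K: "\<And>i. i \<in> {1..n} \<Longrightarrow> K i \<ge> 1"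
    and norm: "\<And>i. i \<in> {1..n} \<Longrightarrow> Re (cinner d (U i) (U i)) \<le> 1 / lam"
  defines "t \<equiv> \<lambda>i. 1 / (real n * Re (cinner d (U i) (U i)))"
  defines "M \<equiv> \<lambda>i. rank_one_mat d (complex_of_real (t i)) (U i)"
  shows "MC_measurement d n \<eta> \<rho> (inconclusive_elem d n M) M"
    and "lam / real n \<le> (\<Sum>i=1..n. \<eta> i * tr_re (\<rho> i) (M i))"
proof -
  have \<rho>: "\<forall>i\<in>{1..n}. psd_op d (\<rho> i)" and \<eta>: "\<forall>i\<in>{1..n}. \<eta> i > 0" and sum\<eta>: "(\<Sum>i=1..n. \<eta> i) = 1"
    using ens unfolding ensemble_def density_op_def by auto
  then have "n \<noteq> 0"
    by (intro notI) simp
  have pos: "Re (cinner d (U i) (U i)) > 0" if "i \<in> {1..n}" for i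
    using max_conf_vector_norm_pos[OF U[OF that]] .
  have t: "t i > 0" "lam / real n \<le> t i" if "i \<in> {1..n}" for i
    using pos[OF that] norm[OF that] lam \<open>n \<noteq> 0\<close> unfolding t_def by (simp_all add: field_simps)
  have m: "measurement d n (inconclusive_elem d n M) M"
    unfolding M_def
  proof (rule measurement_rank_one)
    have "(\<Sum>j=1..n. t j * Re (cinner d (U j) (U j))) = (\<Sum>j=1..n. 1 / real n)"
    proof (rule sum.cong[OF refl])
      fix j assume "j \<in> {1..n}"
      with pos[OF this] show "t j * Re (cinner d (U j) (U j)) = 1 / real n"
        by (simp add: t_def)
    qed
    with \<open>n \<noteq> 0\<close> show "(\<Sum>j=1..n. t j * Re (cinner d (U j) (U j))) \<le> 1"
      by simp
  qed (use U t in \<open>auto simp: max_conf_vector_def less_imp_le\<close>)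
  have "M i \<in> MC_set d n \<eta> \<rho> i" if "i \<in> {1..n}" for i
    by (rule rank_one_MC_element(2)[OF m that less_imp_le[OF bspec[OF \<eta> that]] _ t(1)[OF that]
          bspec[OF \<rho> that] U[OF that]]) (simp add: M_def)
  with m show "MC_measurement d n \<eta> \<rho> (inconclusive_elem d n M) M"
    unfolding MC_measurement_def by blast
  have "lam / real n \<le> tr_re (\<rho> i) (M i)" if i: "i \<in> {1..n}" for i
  proof -
    have "lam / real n \<le> t i"
      using t(2)[OF i] .
    also have "\<dots> \<le> t i * K i"
      using mult_left_mono[of 1 "K i" "t i"] t(1)[OF i] K[OF i] by simp
    also have "\<dots> = tr_re (\<rho> i) (M i)"
      using U[OF i] \<rho> i unfolding max_conf_vector_def
      by (simp add: M_def tr_re_rank_one psd_op_carrier)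
    finally show ?thesis .
  qed
  with sum\<eta> \<eta> show "lam / real n \<le> (\<Sum>i=1..n. \<eta> i * tr_re (\<rho> i) (M i))"
    by (intro convex_sum_lower_bound) (auto intro: less_imp_le)
qed

lemma MC_measurement_success_ge:
  assumes ens: "ensemble d n \<eta> \<rho>" and ob: "orthonormal d d b"
    and ev: "\<forall>j<d. rho0 d n \<eta> \<rho> *\<^sub>v b j = complex_of_real (\<mu> j) \<cdot>\<^sub>v b j"
    and lam: "lam > 0" and mulam: "\<forall>j<d. \<mu> j \<noteq> 0 \<longrightarrow> lam \<le> \<mu> j"
  obtains Mq M where "MC_measurement d n \<eta> \<rho> Mq M"
    "lam / real n \<le> (\<Sum>i=1..n. \<eta> i * tr_re (\<rho> i) (M i))"
proof -
  have "\<forall>i\<in>{1..n}. \<exists>u \<kappa>. max_conf_vector d n \<eta> \<rho> i u \<kappa> \<and> \<kappa> \<ge> 1 \<and> Re (cinner d u u) \<le> 1 / lam"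
  proof
    fix i assume "i \<in> {1..n}"
    from ensemble_max_conf_vector[OF ens this ob ev lam mulam]
    show "\<exists>u \<kappa>. max_conf_vector d n \<eta> \<rho> i u \<kappa> \<and> \<kappa> \<ge> 1 \<and> Re (cinner d u u) \<le> 1 / lam"
      by blast
  qed
  then obtain U K where "\<forall>i\<in>{1..n}. max_conf_vector d n \<eta> \<rho> i (U i) (K i) \<and> K i \<ge> 1 \<and>
      Re (cinner d (U i) (U i)) \<le> 1 / lam"
    by metis
  then show ?thesis
    using MC_measurement_of_max_conf_vectors[OF ens lam, of U K] that by blast
qed

theorem theorem1:
  fixes d n :: nat and \<eta> :: "nat \<Rightarrow> real" and \<rho> :: "nat \<Rightarrow> complex mat" and lam :: real
  assumes "ensemble d n \<eta> \<rho>"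
    and "lam \<noteq> 0" and "eigenvalue (rho0 d n \<eta> \<rho>) (complex_of_real lam)"
    and "\<forall>\<mu>::complex. \<mu> \<noteq> 0 \<and> eigenvalue (rho0 d n \<eta> \<rho>) \<mu> \<longrightarrow> lam \<le> Re \<mu>"
  shows "pG d n \<eta> \<rho> \<ge> lam / real n"
proof -
  have R: "psd_op d (rho0 d n \<eta> \<rho>)"
    using assms(1) unfolding ensemble_def density_op_def by (intro rho0_psd) auto
  have lam: "lam > 0"
    using psd_eigenvalue_nonneg[OF R assms(3)] assms(2) by simp
  obtain b \<mu> where ob: "orthonormal d d b"
    and ev: "\<forall>j<d. rho0 d n \<eta> \<rho> *\<^sub>v b j = complex_of_real (\<mu> j) \<cdot>\<^sub>v b j"
    using hermitian_eigenbasis[OF psd_op_hermitian[OF R]] .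
  have "eigenvalue (rho0 d n \<eta> \<rho>) (complex_of_real (\<mu> j))" if "j < d" for j
    using ev orthonormalD[OF ob that] that
    unfolding eigenvalue_def eigenvector_def by (intro exI[of _ "b j"]) simp
  then have mulam: "\<forall>j<d. \<mu> j \<noteq> 0 \<longrightarrow> lam \<le> \<mu> j"
    using assms(4) by force
  obtain Mq M where "MC_measurement d n \<eta> \<rho> Mq M"
    and "lam / real n \<le> (\<Sum>i=1..n. \<eta> i * tr_re (\<rho> i) (M i))"
    using MC_measurement_success_ge[OF assms(1) ob ev lam mulam] .
  with success_le_pG[OF assms(1)] show ?thesis
    by fastforce
qed

end
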